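(* Let $X$ be a Fréchet space and let $(T(t))_{t\geqslant0}$ be an exponentially equicontinuous $C_0$-semigroup on $X$ with generator $(A,D(A))$. Then \[-\infty\leqslant \operatorname{s}(A)\leqslant\omega_0(T)<+\infty.\]
   Context: A Fréchet space is a complete metrizable locally convex space; $\operatorname{cs}(X)$ denotes its continuous seminorms, a fundamental system is a subset $\Gamma\subseteq\operatorname{cs}(X)$ generating the topology, and $L(X)$ is the space of continuous linear maps $X\to X$. A set of operators in $L(X)$ is equicontinuous if for every continuous seminorm $q$ there exist a continuous seminorm $p$ and $C\geqslant0$ with $q(Sx)\leqslant Cp(x)$ for all operators $S$ in the set and all $x\in X$. A $C_0$-semigroup is a family $(T(t))_{t\geqslant0}\subseteq L(X)$ with $T(0)=\mathrm{id}_X$, $T(t+s)=T(t)T(s)$ for all $t,s\geqslant0$, and $t\mapsto T(t)x$ continuous on $[0,\infty)$ for every $x\in X$. It is exponentially equicontinuous of order $\omega\in\mathbb{R}$ if $\{e^{-\omega t}T(t)\}_{t\geqslant0}$ is equicontinuous, and exponentially equicontinuous if this holds for some $\omega\in\mathbb{R}$. The growth bound $\omega_0(T)$ is the infimum of all $\omega\in\mathbb{R}$ such that $\{e^{-\omega t}T(t)\}_{t\geqslant0}$ is equicontinuous. The generator is $Ax=\lim_{t\searrow0}\frac{T(t)x-x}{t}$ on $D(A)=\{x\in X: \lim_{t\searrow0}\frac{T(t)x-x}{t}\text{ exists}\}$. Let $L(X)_0$ denote the set of $B\in L(X)$ for which there is $\mu\in\mathbb{C}\setminus\{0\}$ such that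 $\{(\mu B)^n\}_{n\in\mathbb{N}_0}$ is equicontinuous (equivalently, bounded in the topology of uniform convergence on bounded sets). For a linear operator $A\colon D(A)\to X$ with $D(A)\subseteq X$ a linear subspace, put $\delta_A=\{\infty\}$ if $D(A)=X$ and $A\in L(X)_0$, and $\delta_A=\varnothing$ otherwise. The resolvent set is $\rho(A)=\{\lambda\in\mathbb{C}: \lambda-A\colon D(A)\to X\text{ is bijective and }R(\lambda,A)=(\lambda-A)^{-1}\in L(X)_0\}\cup\delta_A$, the spectrum is $\sigma(A)=(\mathbb{C}\cup\{\infty\})\setminus\rho(A)$, and the spectral bound is $\operatorname{s}(A)=\sup\{\operatorname{Re}\lambda:\lambda\in\sigma(A)\cap\mathbb{C}\}$ (with $\sup\varnothing=-\infty$). *)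

theory Defs
  imports "HOL-Analysis.Analysis"
begin

class cvector = ab_group_add +
  fixes scaleC :: "complex \<Rightarrow> 'a \<Rightarrow> 'a" (infixr "*\<^sub>C" 75)
  assumes scaleC_add_right: "a *\<^sub>C (x + y) = a *\<^sub>C x + a *\<^sub>C y"
    and scaleC_add_left: "(a + b) *\<^sub>C x = a *\<^sub>C x + b *\<^sub>C x"
    and scaleC_scaleC: "a *\<^sub>C (b *\<^sub>C x) = (a * b) *\<^sub>C x"
    and scaleC_one: "1 *\<^sub>C x = x"

definition clinear_map :: "('a::cvector \<Rightarrow> 'a) \<Rightarrow> bool" where
  "clinear_map T \<longleftrightarrow> (\<forall>x y. T (x + y) = T x + T y) \<and> (\<forall>c x. T (c *\<^sub>C x) = c *\<^sub>C T x)"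

definition seminorm :: "('a::cvector \<Rightarrow> real) \<Rightarrow> bool" where
  "seminorm p \<longleftrightarrow> (\<forall>x y. p (x + y) \<le> p x + p y) \<and> (\<forall>c x. p (c *\<^sub>C x) = cmod c * p x)"

definition seminorm_topology :: "(nat \<Rightarrow> 'a::cvector \<Rightarrow> real) \<Rightarrow> 'a topology" where
  "seminorm_topology P = topology (\<lambda>U. \<forall>x\<in>U. \<exists>m. \<exists>e>0.
      {y. (\<Sum>k\<le>m. P k (y - x)) < e} \<subseteq> U)"

definition frechet :: "(nat \<Rightarrow> 'a::cvector \<Rightarrow> real) \<Rightarrow> bool" where
  "frechet P \<longleftrightarrow> (\<forall>n. seminorm (P n))
     \<and> (\<forall>x. (\<forall>n. P n x = 0) \<longrightarrow> x = 0)
     \<and> (\<forall>f :: nat \<Rightarrow> 'a. (\<forall>n. \<forall>e>0. \<exists>N. \<forall>k\<ge>N. \<forall>l\<ge>N. P n (f k - f l) < e)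
            \<longrightarrow> (\<exists>y. limitin (seminorm_topology P) f y sequentially))"

definition cont_seminorms :: "(nat \<Rightarrow> 'a::cvector \<Rightarrow> real) \<Rightarrow> ('a \<Rightarrow> real) set" where
  "cont_seminorms P = {q. seminorm q \<and> continuous_map (seminorm_topology P) euclideanreal q}"

definition cont_ops :: "(nat \<Rightarrow> 'a::cvector \<Rightarrow> real) \<Rightarrow> ('a \<Rightarrow> 'a) set" where
  "cont_ops P = {T. clinear_map T \<and>
      continuous_map (seminorm_topology P) (seminorm_topology P) T}"

definition equicontinuous :: "(nat \<Rightarrow> 'a::cvector \<Rightarrow> real) \<Rightarrow> ('a \<Rightarrow> 'a) set \<Rightarrow> bool" where
  "equicontinuous P S \<longleftrightarrow> S \<subseteq> cont_ops P \<and>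
     (\<forall>q\<in>cont_seminorms P. \<exists>p\<in>cont_seminorms P. \<exists>C\<ge>0.
        \<forall>B\<in>S. \<forall>x. q (B x) \<le> C * p x)"

definition C0_semigroup :: "(nat \<Rightarrow> 'a::cvector \<Rightarrow> real) \<Rightarrow> (real \<Rightarrow> 'a \<Rightarrow> 'a) \<Rightarrow> bool" where
  "C0_semigroup P T \<longleftrightarrow> (\<forall>t\<ge>0. T t \<in> cont_ops P) \<and> T 0 = id
     \<and> (\<forall>t\<ge>0. \<forall>s\<ge>0. T (t + s) = T t \<circ> T s)
     \<and> (\<forall>x. continuous_map (top_of_set {0..}) (seminorm_topology P) (\<lambda>t. T t x))"

definition exp_equicont_order :: "(nat \<Rightarrow> 'a::cvector \<Rightarrow> real) \<Rightarrow> (real \<Rightarrow> 'a \<Rightarrow> 'a) \<Rightarrow> real \<Rightarrow> bool" where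
  "exp_equicont_order P T \<omega> \<longleftrightarrow>
     equicontinuous P ((\<lambda>t x. complex_of_real (exp (- \<omega> * t)) *\<^sub>C T t x) ` {0..})"

definition exp_equicont :: "(nat \<Rightarrow> 'a::cvector \<Rightarrow> real) \<Rightarrow> (real \<Rightarrow> 'a \<Rightarrow> 'a) \<Rightarrow> bool" where
  "exp_equicont P T \<longleftrightarrow> (\<exists>\<omega>. exp_equicont_order P T \<omega>)"

text \<open>Growth bound, as an extended real (Inf of the empty set is +infinity)\<close>
definition growth_bound :: "(nat \<Rightarrow> 'a::cvector \<Rightarrow> real) \<Rightarrow> (real \<Rightarrow> 'a \<Rightarrow> 'a) \<Rightarrow> ereal" where
  "growth_bound P T = (INF \<omega>\<in>{\<omega>. exp_equicont_order P T \<omega>}. ereal \<omega>)"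

definition is_generator :: "(nat \<Rightarrow> 'a::cvector \<Rightarrow> real) \<Rightarrow> (real \<Rightarrow> 'a \<Rightarrow> 'a)
    \<Rightarrow> ('a \<Rightarrow> 'a) \<Rightarrow> 'a set \<Rightarrow> bool" where
  "is_generator P T A D \<longleftrightarrow>
     D = {x. \<exists>y. limitin (seminorm_topology P)
                 (\<lambda>h. complex_of_real (1 / h) *\<^sub>C (T h x - x)) y (at_right 0)}
     \<and> (\<forall>x\<in>D. limitin (seminorm_topology P)
                 (\<lambda>h. complex_of_real (1 / h) *\<^sub>C (T h x - x)) (A x) (at_right 0))"

definition L0 :: "(nat \<Rightarrow> 'a::cvector \<Rightarrow> real) \<Rightarrow> ('a \<Rightarrow> 'a) set" where
  "L0 P = {B \<in> cont_ops P. \<exists>\<mu>. \<mu> \<noteq> 0 \<and>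
      equicontinuous P (range (\<lambda>n::nat. \<lambda>x. (\<mu> ^ n) *\<^sub>C (B ^^ n) x))}"

text \<open>Resolvent set as a subset of C \<union> {\<infinity>}, modelled by complex option
  (None = \<infinity>).\<close>
definition resolvent_set :: "(nat \<Rightarrow> 'a::cvector \<Rightarrow> real) \<Rightarrow> ('a \<Rightarrow> 'a) \<Rightarrow> 'a set
    \<Rightarrow> complex option set" where
  "resolvent_set P A D =
     Some ` {l. bij_betw (\<lambda>x. l *\<^sub>C x - A x) D UNIV
                \<and> inv_into D (\<lambda>x. l *\<^sub>C x - A x) \<in> L0 P}
     \<union> (if D = UNIV \<and> A \<in> L0 P then {None} else {})"

definition spectrum_op :: "(nat \<Rightarrow> 'a::cvector \<Rightarrow> real) \<Rightarrow> ('a \<Rightarrow> 'a) \<Rightarrow> 'a set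
    \<Rightarrow> complex option set" where
  "spectrum_op P A D = UNIV - resolvent_set P A D"

text \<open>Spectral bound (Sup of the empty set is -infinity)\<close>
definition spectral_bound :: "(nat \<Rightarrow> 'a::cvector \<Rightarrow> real) \<Rightarrow> ('a \<Rightarrow> 'a) \<Rightarrow> 'a set \<Rightarrow> ereal" where
  "spectral_bound P A D = (SUP l\<in>{l. Some l \<in> spectrum_op P A D}. ereal (Re l))"

end

theory Submission
  imports Defs
begin

text \<open>
  Finiteness of the growth bound is exponential equicontinuity itself. For the spectral bound, let
  \<open>exp (- \<omega> t) T t\<close> be equicontinuous and \<open>Re \<lambda> > \<omega>\<close>; we show \<open>\<lambda> \<in> \<rho>(A)\<close>. The seminorms
  \<open>q\<^sub>n x = sup\<^sub>t\<^sub>\<ge>\<^sub>0 exp (- \<omega> t) p\<^sub>n (T t x)\<close> are continuous, dominate \<open>p\<^sub>n\<close>, and satisfy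
  \<open>q\<^sub>n (T s x) \<le> exp (\<omega> s) q\<^sub>n x\<close>. Hence the Riemann sums of the Laplace integral
  \<open>R x = \<integral>\<^sub>0\<^sup>\<infinity> exp (- \<lambda> t) T t x dt\<close> form a Cauchy sequence, and their limit satisfies
  \<open>q\<^sub>n (R x) \<le> q\<^sub>n x / (Re \<lambda> - \<omega>)\<close>: the powers of \<open>(Re \<lambda> - \<omega>) R\<close> are equicontinuous, that is,
  \<open>R \<in> L(X)\<^sub>0\<close>. Finally \<open>(T h R x - R x) / h \<rightarrow> \<lambda> R x - x\<close> as \<open>h \<rightarrow> 0+\<close>, which makes \<open>R\<close> a
  two-sided inverse of \<open>\<lambda> - A\<close>.
\<close>

lemma scaleC_zero_left [simp]: "0 *\<^sub>C (x::'a::cvector) = 0"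
  using scaleC_add_left[of 0 0 x] by simp

lemma scaleC_zero_right [simp]: "a *\<^sub>C (0::'a::cvector) = 0"
  using scaleC_add_right[of a 0 0] by simp

lemma scaleC_minus_left: "(- a) *\<^sub>C (x::'a::cvector) = - (a *\<^sub>C x)"
  using scaleC_add_left[of a "- a" x] by (simp add: eq_neg_iff_add_eq_0 add.commute)

lemma scaleC_minus_right: "a *\<^sub>C (- x::'a::cvector) = - (a *\<^sub>C x)"
  using scaleC_add_right[of a x "- x"] by (simp add: eq_neg_iff_add_eq_0 add.commute)

lemma scaleC_diff_left: "(a - b) *\<^sub>C (x::'a::cvector) = a *\<^sub>C x - b *\<^sub>C x"
  using scaleC_add_left[of a "- b" x] by (simp add: scaleC_minus_left)

lemma scaleC_diff_right: "a *\<^sub>C (x - y::'a::cvector) = a *\<^sub>C x - a *\<^sub>C y"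
  using scaleC_add_right[of a x "- y"] by (simp add: scaleC_minus_right)

lemma scaleC_sum_left: "(sum f A) *\<^sub>C (x::'a::cvector) = (\<Sum>i\<in>A. f i *\<^sub>C x)"
  by (induction A rule: infinite_finite_induct) (auto simp: scaleC_add_left)

lemma scaleC_sum_right: "a *\<^sub>C (sum f A::'a::cvector) = (\<Sum>i\<in>A. a *\<^sub>C f i)"
  by (induction A rule: infinite_finite_induct) (auto simp: scaleC_add_right)

lemma scaleC_left_commute: "a *\<^sub>C b *\<^sub>C (x::'a::cvector) = b *\<^sub>C a *\<^sub>C x"
  by (simp add: scaleC_scaleC mult.commute)

lemma clinear_map_add: "clinear_map T \<Longrightarrow> T (x + y) = T x + T y"
  by (simp add: clinear_map_def)

lemma clinear_map_scaleC: "clinear_map T \<Longrightarrow> T (c *\<^sub>C x) = c *\<^sub>C T x"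
  by (simp add: clinear_map_def)

lemma clinear_map_zero: "clinear_map T \<Longrightarrow> T 0 = 0"
  using clinear_map_scaleC[of T 0 0] by simp

lemma clinear_map_diff: "clinear_map T \<Longrightarrow> T (x - y) = T x - T y"
  using clinear_map_scaleC[of T "- 1" y] clinear_map_add[of T x "(- 1) *\<^sub>C y"]
  by (simp add: scaleC_minus_left scaleC_one)

lemma clinear_map_sum: "clinear_map T \<Longrightarrow> T (sum f A) = (\<Sum>i\<in>A. T (f i))"
  by (induction A rule: infinite_finite_induct) (auto simp: clinear_map_add clinear_map_zero)

lemma clinear_map_funpow: "clinear_map T \<Longrightarrow> clinear_map (T ^^ n)"
  by (induction n) (simp_all add: clinear_map_def)

lemma seminorm_add: "seminorm p \<Longrightarrow> p (x + y) \<le> p x + p y"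
  by (simp add: seminorm_def)

lemma seminorm_scaleC: "seminorm p \<Longrightarrow> p (c *\<^sub>C x) = cmod c * p x"
  by (simp add: seminorm_def)

lemma seminorm_zero: "seminorm p \<Longrightarrow> p 0 = 0"
  using seminorm_scaleC[of p 0 0] by simp

lemma seminorm_minus: "seminorm p \<Longrightarrow> p (- x) = p x"
  using seminorm_scaleC[of p "- 1" x] by (simp add: scaleC_minus_left scaleC_one)

lemma seminorm_nonneg: "seminorm p \<Longrightarrow> 0 \<le> p x"
  using seminorm_add[of p x "- x"] by (simp add: seminorm_zero seminorm_minus)

lemma seminorm_minus_commute: "seminorm p \<Longrightarrow> p (x - y) = p (y - x)"
  using seminorm_minus[of p "y - x"] by simp

lemma seminorm_diff_le: "seminorm p \<Longrightarrow> p (x - y) \<le> p x + p y"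
  using seminorm_add[of p x "- y"] by (simp add: seminorm_minus)

lemma seminorm_triangle: "seminorm p \<Longrightarrow> p (x - z) \<le> p (x - y) + p (y - z)"
  using seminorm_add[of p "x - y" "y - z"] by simp

lemma seminorm_sum_le: "seminorm p \<Longrightarrow> p (sum f A) \<le> (\<Sum>i\<in>A. p (f i))"
proof (induction A rule: infinite_finite_induct)
  case (insert x F)
  then show ?case using seminorm_add[of p "f x" "sum f F"] by simp
qed (simp_all add: seminorm_zero)

lemma seminorm_reverse_triangle: "seminorm p \<Longrightarrow> \<bar>p x - p y\<bar> \<le> p (x - y)"
  using seminorm_triangle[of p x 0 y] seminorm_triangle[of p y 0 x]
  by (simp add: seminorm_minus seminorm_minus_commute[of p y x] abs_le_iff)

lemma seminorm_cauchyI: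
  assumes p: "seminorm p" and bound: "\<And>N M. N \<le> M \<Longrightarrow> p (f M - f N) \<le> b N"
    and b: "b \<longlonglongrightarrow> 0" and "e > 0"
  shows "\<exists>N. \<forall>k\<ge>N. \<forall>l\<ge>N. p (f k - f l) < e"
proof -
  obtain N where N: "\<And>k. k \<ge> N \<Longrightarrow> b k < e"
    using order_tendstoD(2)[OF b \<open>e > 0\<close>] unfolding eventually_sequentially by blast
  have "p (f k - f l) < e" if "k \<ge> N" "l \<ge> N" for k l
  proof (cases "l \<le> k")
    case True
    then show ?thesis using bound[of l k] N[OF \<open>l \<ge> N\<close>] by linarith
  next
    case False
    then show ?thesis
      using bound[of k l] N[OF \<open>k \<ge> N\<close>] seminorm_minus_commute[OF p, of "f k" "f l"] by linarith
  qed
  then show ?thesis by blast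
qed

section \<open>Locally convex topologies from a sequence of seminorms\<close>

lemma mult_less_if_less_divide:
  fixes C s r :: real
  assumes "s < r / (C + 1)" "0 \<le> C" "0 \<le> s"
  shows "C * s < r"
proof -
  have "s * (C + 1) < r" using assms by (simp add: pos_less_divide_eq)
  then show ?thesis using \<open>0 \<le> s\<close> by (simp add: algebra_simps)
qed

locale seminorm_family =
  fixes P :: "nat \<Rightarrow> 'a::cvector \<Rightarrow> real"
  assumes seminorm_P: "seminorm (P n)"
begin

definition seminorm_upto :: "nat \<Rightarrow> 'a \<Rightarrow> real" where
  "seminorm_upto m x = (\<Sum>k\<le>m. P k x)"

lemma seminorm_upto: "seminorm (seminorm_upto m)"
  using seminorm_add[OF seminorm_P] seminorm_scaleC[OF seminorm_P]
  by (simp add: seminorm_def seminorm_upto_def sum.distrib[symmetric] sum_mono sum_distrib_left)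

lemma seminorm_upto_nonneg: "0 \<le> seminorm_upto m x"
  by (rule seminorm_nonneg[OF seminorm_upto])

lemma seminorm_upto_mono: "m \<le> M \<Longrightarrow> seminorm_upto m x \<le> seminorm_upto M x"
  unfolding seminorm_upto_def by (intro sum_mono2) (auto intro: seminorm_nonneg[OF seminorm_P])

lemma P_le_seminorm_upto: "k \<le> m \<Longrightarrow> P k x \<le> seminorm_upto m x"
  unfolding seminorm_upto_def by (intro member_le_sum) (auto intro: seminorm_nonneg[OF seminorm_P])

lemma openin_seminorm_topology:
  "openin (seminorm_topology P) U \<longleftrightarrow> (\<forall>x\<in>U. \<exists>m. \<exists>e>0. {y. seminorm_upto m (y - x) < e} \<subseteq> U)"
proof -
  let ?open = "\<lambda>U. \<forall>x\<in>U. \<exists>m. \<exists>e>0. {y. seminorm_upto m (y - x) < e} \<subseteq> U"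
  have "?open (S \<inter> T)" if S: "?open S" and T: "?open T" for S T
  proof
    fix x assume x: "x \<in> S \<inter> T"
    obtain m1 e1 where e1: "e1 > 0" and S': "{y. seminorm_upto m1 (y - x) < e1} \<subseteq> S"
      using S x by blast
    obtain m2 e2 where e2: "e2 > 0" and T': "{y. seminorm_upto m2 (y - x) < e2} \<subseteq> T"
      using T x by blast
    have "{y. seminorm_upto (max m1 m2) (y - x) < min e1 e2} \<subseteq> S \<inter> T"
    proof
      fix y assume "y \<in> {y. seminorm_upto (max m1 m2) (y - x) < min e1 e2}"
      then have "seminorm_upto m1 (y - x) < e1" "seminorm_upto m2 (y - x) < e2"
        using seminorm_upto_mono[of m1 "max m1 m2" "y - x"]
          seminorm_upto_mono[of m2 "max m1 m2" "y - x"] by auto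
      then show "y \<in> S \<inter> T" using S' T' by blast
    qed
    then show "\<exists>m. \<exists>e>0. {y. seminorm_upto m (y - x) < e} \<subseteq> S \<inter> T"
      using e1 e2 by (metis min_less_iff_conj)
  qed
  moreover have "?open (\<Union>K)" if K: "\<forall>U\<in>K. ?open U" for K
  proof
    fix x assume "x \<in> \<Union>K"
    then obtain U where U: "U \<in> K" "x \<in> U" by blast
    with K obtain m e where "e > 0" "{y. seminorm_upto m (y - x) < e} \<subseteq> U" by blast
    with U show "\<exists>m. \<exists>e>0. {y. seminorm_upto m (y - x) < e} \<subseteq> \<Union>K" by blast
  qed
  ultimately have "istopology ?open"
    unfolding istopology_def by blast
  moreover have "seminorm_topology P = topology ?open"
    by (simp add: seminorm_topology_def seminorm_upto_def)
  ultimately show ?thesis by (simp add: topology_inverse')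
qed

lemma topspace_seminorm_topology [simp]: "topspace (seminorm_topology P) = UNIV"
proof -
  have "openin (seminorm_topology P) UNIV"
    by (auto simp: openin_seminorm_topology intro: exI[of _ 1])
  then show ?thesis by (auto dest: openin_subset)
qed

lemma openin_seminorm_ball: "openin (seminorm_topology P) {y. seminorm_upto m (y - x) < e}"
  unfolding openin_seminorm_topology
proof
  fix z assume "z \<in> {y. seminorm_upto m (y - x) < e}"
  moreover have "{y. seminorm_upto m (y - z) < e - seminorm_upto m (z - x)}
      \<subseteq> {y. seminorm_upto m (y - x) < e}"
  proof (intro subsetI, simp)
    fix y assume "seminorm_upto m (y - z) < e - seminorm_upto m (z - x)"
    then show "seminorm_upto m (y - x) < e"
      using seminorm_triangle[OF seminorm_upto, of m y x z] by linarith
  qed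
  ultimately show "\<exists>m'. \<exists>e'>0. {y. seminorm_upto m' (y - z) < e'} \<subseteq> {y. seminorm_upto m (y - x) < e}"
    by (intro exI[of _ m] exI[of _ "e - seminorm_upto m (z - x)"]) auto
qed

lemma limitin_seminorm_upto:
  assumes "limitin (seminorm_topology P) f y F" and "e > 0"
  shows "eventually (\<lambda>i. seminorm_upto m (f i - y) < e) F"
  using assms openin_seminorm_ball[of m y e] seminorm_zero[OF seminorm_upto]
  unfolding limitin_def by auto

lemma limitin_seminorm_topology:
  "limitin (seminorm_topology P) f y F \<longleftrightarrow> (\<forall>n. \<forall>e>0. eventually (\<lambda>i. P n (f i - y) < e) F)"
proof
  assume lim: "limitin (seminorm_topology P) f y F"
  show "\<forall>n. \<forall>e>0. eventually (\<lambda>i. P n (f i - y) < e) F"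
  proof (intro allI impI)
    fix n and e :: real assume "e > 0"
    from limitin_seminorm_upto[OF lim this, of n] show "eventually (\<lambda>i. P n (f i - y) < e) F"
      by (rule eventually_mono) (meson P_le_seminorm_upto order_refl le_less_trans)
  qed
next
  assume H: "\<forall>n. \<forall>e>0. eventually (\<lambda>i. P n (f i - y) < e) F"
  show "limitin (seminorm_topology P) f y F"
    unfolding limitin_def
  proof (intro conjI allI impI)
    fix U assume "openin (seminorm_topology P) U \<and> y \<in> U"
    then obtain m e where e: "e > 0" and U: "{z. seminorm_upto m (z - y) < e} \<subseteq> U"
      using openin_seminorm_topology by blast
    have "eventually (\<lambda>i. \<forall>k\<in>{..m}. P k (f i - y) < e / (m + 1)) F"
      using H e by (intro eventually_ball_finite) auto
    then show "eventually (\<lambda>i. f i \<in> U) F"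
    proof (rule eventually_mono)
      fix i assume "\<forall>k\<in>{..m}. P k (f i - y) < e / (m + 1)"
      then have "(\<Sum>k\<le>m. P k (f i - y)) < (\<Sum>k\<le>m. e / (m + 1))"
        by (intro sum_strict_mono) auto
      then show "f i \<in> U" using U by (auto simp: seminorm_upto_def)
    qed
  qed simp
qed

definition dominated :: "('a \<Rightarrow> real) \<Rightarrow> bool" where
  "dominated q \<longleftrightarrow> (\<exists>m. \<exists>C\<ge>0. \<forall>x. q x \<le> C * seminorm_upto m x)"

lemma dominatedI: "C \<ge> 0 \<Longrightarrow> (\<And>x. q x \<le> C * seminorm_upto m x) \<Longrightarrow> dominated q"
  unfolding dominated_def by blast

lemma dominatedE:
  assumes "dominated q"
  obtains m C where "C \<ge> 0" "\<And>x. q x \<le> C * seminorm_upto m x"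
  using assms unfolding dominated_def by blast

lemma dominated_seminorm_upto: "dominated (seminorm_upto m)"
  by (rule dominatedI[of 1 _ m]) simp_all

lemma dominated_P: "dominated (P n)"
  by (rule dominatedI[of 1 _ n]) (simp_all add: P_le_seminorm_upto)

lemma dominated_le:
  assumes "dominated q" "c \<ge> 0" "\<And>x. p x \<le> c * q x"
  shows "dominated p"
proof -
  obtain m C where "C \<ge> 0" "\<And>x. q x \<le> C * seminorm_upto m x"
    using assms(1) unfolding dominated_def by blast
  then have "p x \<le> (c * C) * seminorm_upto m x" for x
    using assms(2) assms(3)[of x] by (metis mult.assoc mult_left_mono order_trans)
  then show ?thesis
    using \<open>C \<ge> 0\<close> assms(2) by (intro dominatedI[of "c * C"]) simp_all
qed

lemma dominated_add: "dominated p \<Longrightarrow> dominated q \<Longrightarrow> dominated (\<lambda>x. p x + q x)"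
proof (elim dominatedE)
  fix m1 C1 m2 C2
  assume C: "C1 \<ge> 0" "C2 \<ge> 0"
    and p: "\<And>x. p x \<le> C1 * seminorm_upto m1 x" and q: "\<And>x. q x \<le> C2 * seminorm_upto m2 x"
  show "dominated (\<lambda>x. p x + q x)"
  proof (rule dominatedI[of "C1 + C2" _ "max m1 m2"])
    fix x
    have "C1 * seminorm_upto m1 x \<le> C1 * seminorm_upto (max m1 m2) x"
      "C2 * seminorm_upto m2 x \<le> C2 * seminorm_upto (max m1 m2) x"
      using C by (simp_all add: mult_left_mono seminorm_upto_mono)
    then have "p x + q x \<le> C1 * seminorm_upto (max m1 m2) x + C2 * seminorm_upto (max m1 m2) x"
      using p[of x] q[of x] by linarith
    then show "p x + q x \<le> (C1 + C2) * seminorm_upto (max m1 m2) x"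
      by (simp add: distrib_right)
  qed (use C in simp)
qed

lemma dominated_sum: "(\<And>k. k \<in> A \<Longrightarrow> dominated (q k)) \<Longrightarrow> dominated (\<lambda>x. \<Sum>k\<in>A. q k x)"
proof (induction A rule: infinite_finite_induct)
  case (insert k A)
  then show ?case by (simp add: dominated_add)
qed (simp_all add: dominatedI[of 0])

lemma limitin_seminorm_topology_tendsto:
  "limitin (seminorm_topology P) f y F \<longleftrightarrow> (\<forall>n. ((\<lambda>i. P n (f i - y)) \<longlongrightarrow> 0) F)"
  unfolding limitin_seminorm_topology tendsto_iff dist_real_def
  by (simp add: seminorm_nonneg[OF seminorm_P])

lemma limitin_seminorm_topologyI:
  assumes "\<And>n. eventually (\<lambda>i. P n (f i - y) \<le> b n i) F" and "\<And>n. (b n \<longlongrightarrow> 0) F"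
  shows "limitin (seminorm_topology P) f y F"
  unfolding limitin_seminorm_topology_tendsto
  using tendsto_sandwich[OF _ assms(1) tendsto_const assms(2)]
  by (simp add: seminorm_nonneg[OF seminorm_P])

lemma limitin_dominated:
  assumes "limitin (seminorm_topology P) f y F" and q: "seminorm q" "dominated q"
  shows "((\<lambda>i. q (f i - y)) \<longlongrightarrow> 0) F"
proof -
  obtain m C where C: "\<And>x. q x \<le> C * seminorm_upto m x"
    using \<open>dominated q\<close> unfolding dominated_def by blast
  have "((\<lambda>i. C * seminorm_upto m (f i - y)) \<longlongrightarrow> C * 0) F"
    using assms(1) unfolding limitin_seminorm_topology_tendsto seminorm_upto_def
    by (intro tendsto_mult tendsto_const tendsto_null_sum) auto
  then have "((\<lambda>i. C * seminorm_upto m (f i - y)) \<longlongrightarrow> 0) F" by simp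
  from tendsto_sandwich[OF _ _ tendsto_const this] show ?thesis
    by (simp add: C seminorm_nonneg[OF q(1)])
qed

lemma limitin_add:
  assumes "limitin (seminorm_topology P) f y F" and "limitin (seminorm_topology P) g z F"
  shows "limitin (seminorm_topology P) (\<lambda>i. f i + g i) (y + z) F"
proof (rule limitin_seminorm_topologyI)
  fix n
  show "eventually (\<lambda>i. P n (f i + g i - (y + z)) \<le> P n (f i - y) + P n (g i - z)) F"
    using seminorm_add[OF seminorm_P, of n "f i - y" "g i - z" for i] by (simp add: algebra_simps)
  show "((\<lambda>i. P n (f i - y) + P n (g i - z)) \<longlongrightarrow> 0) F"
    using assms unfolding limitin_seminorm_topology_tendsto by (intro tendsto_add_zero) auto
qed

lemma limitin_scaleC:
  assumes "(c \<longlongrightarrow> a) F" and "limitin (seminorm_topology P) f z F"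
  shows "limitin (seminorm_topology P) (\<lambda>i. c i *\<^sub>C f i) (a *\<^sub>C z) F"
proof (rule limitin_seminorm_topologyI)
  fix n
  have "c i *\<^sub>C f i - a *\<^sub>C z = c i *\<^sub>C (f i - z) + (c i - a) *\<^sub>C z" for i
    by (simp add: scaleC_diff_right scaleC_diff_left)
  then have "P n (c i *\<^sub>C f i - a *\<^sub>C z) \<le> cmod (c i) * P n (f i - z) + cmod (c i - a) * P n z" for i
    using seminorm_add[OF seminorm_P, of n "c i *\<^sub>C (f i - z)" "(c i - a) *\<^sub>C z"]
    by (simp add: seminorm_scaleC[OF seminorm_P])
  then show "eventually (\<lambda>i. P n (c i *\<^sub>C f i - a *\<^sub>C z)
      \<le> cmod (c i) * P n (f i - z) + cmod (c i - a) * P n z) F"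
    by (intro always_eventually allI)
  have "((\<lambda>i. cmod (c i) * P n (f i - z) + cmod (c i - a) * P n z)
      \<longlongrightarrow> cmod a * 0 + cmod (a - a) * P n z) F"
    using assms unfolding limitin_seminorm_topology_tendsto by (intro tendsto_intros) auto
  then show "((\<lambda>i. cmod (c i) * P n (f i - z) + cmod (c i - a) * P n z) \<longlongrightarrow> 0) F"
    by simp
qed

lemma limitin_diff:
  assumes "limitin (seminorm_topology P) f y F" and "limitin (seminorm_topology P) g z F"
  shows "limitin (seminorm_topology P) (\<lambda>i. f i - g i) (y - z) F"
  using limitin_add[OF assms(1) limitin_scaleC[OF tendsto_const assms(2), of "- 1"]]
  by (simp add: scaleC_minus_left scaleC_one)

lemma cont_seminorms_dominated:
  assumes "q \<in> cont_seminorms P"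
  shows "dominated q"
proof -
  have q: "seminorm q" and cont: "continuous_map (seminorm_topology P) euclideanreal q"
    using assms by (auto simp: cont_seminorms_def)
  have "openin (seminorm_topology P) {x. q x < 1}"
    using openin_continuous_map_preimage[OF cont, of "{..<1}"] by simp
  moreover have "0 \<in> {x. q x < 1}" using seminorm_zero[OF q] by simp
  ultimately obtain m e where e: "e > 0" and "{y. seminorm_upto m (y - 0) < e} \<subseteq> {x. q x < 1}"
    unfolding openin_seminorm_topology by blast
  then have ball: "\<And>y. seminorm_upto m y < e \<Longrightarrow> q y < 1" by auto
  have "q x \<le> (1 / e) * seminorm_upto m x" for x
  proof (rule field_le_epsilon)
    fix \<delta> :: real assume "\<delta> > 0"
    define t where "t = e / (seminorm_upto m x + \<delta> * e)"
    have pos: "seminorm_upto m x + \<delta> * e > 0"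
      using e \<open>\<delta> > 0\<close> seminorm_upto_nonneg[of m x] by (simp add: add_nonneg_pos)
    then have t: "t > 0" using e by (simp add: t_def)
    have "seminorm_upto m (of_real t *\<^sub>C x) = t * seminorm_upto m x"
      using t by (simp add: seminorm_scaleC[OF seminorm_upto])
    also have "\<dots> = e * (seminorm_upto m x / (seminorm_upto m x + \<delta> * e))"
      by (simp add: t_def)
    also have "\<dots> < e * 1"
      using e \<open>\<delta> > 0\<close> seminorm_upto_nonneg[of m x]
      by (intro mult_strict_left_mono) (simp_all add: divide_less_eq add_nonneg_pos)
    finally have "q (of_real t *\<^sub>C x) < 1" by (intro ball) simp
    then have "t * q x < 1"
      using t by (simp add: seminorm_scaleC[OF q])
    then show "q x \<le> (1 / e) * seminorm_upto m x + \<delta>"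
      using pos e by (simp add: t_def field_simps)
  qed
  then show ?thesis using e by (intro dominatedI[of "1 / e"]) simp_all
qed

lemma cont_seminormsI:
  assumes q: "seminorm q" and "dominated q"
  shows "q \<in> cont_seminorms P"
proof -
  obtain m C where C: "C \<ge> 0" "\<And>x. q x \<le> C * seminorm_upto m x"
    using \<open>dominated q\<close> unfolding dominated_def by blast
  have "openin (seminorm_topology P) {x. q x \<in> U}" if "open U" for U
    unfolding openin_seminorm_topology
  proof
    fix x assume "x \<in> {x. q x \<in> U}"
    then obtain r where r: "r > 0" "ball (q x) r \<subseteq> U"
      using \<open>open U\<close> open_contains_ball by blast
    have "q y \<in> U" if "seminorm_upto m (y - x) < r / (C + 1)" for y
    proof -
      have "\<bar>q y - q x\<bar> \<le> C * seminorm_upto m (y - x)"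
        using seminorm_reverse_triangle[OF q, of y x] C(2) by (rule order_trans)
      also have "\<dots> < r"
        using that C(1) seminorm_upto_nonneg[of m "y - x"] by (rule mult_less_if_less_divide)
      finally show ?thesis using r by (auto simp: dist_real_def)
    qed
    then show "\<exists>m. \<exists>e>0. {y. seminorm_upto m (y - x) < e} \<subseteq> {x. q x \<in> U}"
      using r C by (intro exI[of _ m] exI[of _ "r / (C + 1)"]) auto
  qed
  then show ?thesis
    using q by (simp add: cont_seminorms_def continuous_map_def)
qed

lemma cont_opsI:
  assumes B: "clinear_map B" and dom: "\<And>n. dominated (\<lambda>x. P n (B x))"
  shows "B \<in> cont_ops P"
proof -
  have "openin (seminorm_topology P) {x. B x \<in> U}" if U: "openin (seminorm_topology P) U" for U
    unfolding openin_seminorm_topology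
  proof
    fix x assume "x \<in> {x. B x \<in> U}"
    then obtain m e where e: "e > 0" "{y. seminorm_upto m (y - B x) < e} \<subseteq> U"
      using U openin_seminorm_topology by blast
    have "dominated (\<lambda>x. seminorm_upto m (B x))"
      unfolding seminorm_upto_def using dom by (rule dominated_sum)
    then obtain M C where C: "C \<ge> 0" "\<And>x. seminorm_upto m (B x) \<le> C * seminorm_upto M x"
      unfolding dominated_def by blast
    have "B y \<in> U" if "seminorm_upto M (y - x) < e / (C + 1)" for y
    proof -
      have "seminorm_upto m (B y - B x) \<le> C * seminorm_upto M (y - x)"
        using C(2)[of "y - x"] by (simp add: clinear_map_diff[OF B])
      also have "\<dots> < e"
        using that C(1) seminorm_upto_nonneg[of M "y - x"] by (rule mult_less_if_less_divide)
      finally show ?thesis using e(2) by blast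
    qed
    then show "\<exists>m. \<exists>e>0. {y. seminorm_upto m (y - x) < e} \<subseteq> {x. B x \<in> U}"
      using e C by (intro exI[of _ M] exI[of _ "e / (C + 1)"]) auto
  qed
  then show ?thesis
    using B by (simp add: cont_ops_def continuous_map_def)
qed

lemma P_cont_seminorm: "P n \<in> cont_seminorms P"
  by (simp add: cont_seminormsI seminorm_P dominated_P)

lemma equicontinuous_dominated:
  assumes "equicontinuous P S"
  obtains m C where "C \<ge> 0" "\<And>B x. B \<in> S \<Longrightarrow> P n (B x) \<le> C * seminorm_upto m x"
proof -
  obtain p C where p: "p \<in> cont_seminorms P" and C: "C \<ge> 0" "\<forall>B\<in>S. \<forall>x. P n (B x) \<le> C * p x"
    using assms P_cont_seminorm unfolding equicontinuous_def by blast
  have "dominated (\<lambda>x. C * p x)"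
    using cont_seminorms_dominated[OF p] C(1) by (rule dominated_le) simp
  then obtain m C' where "C' \<ge> 0" "\<And>x. C * p x \<le> C' * seminorm_upto m x"
    unfolding dominated_def by blast
  with C(2) show thesis by (intro that) (auto intro: order_trans)
qed

lemma equicontinuousI:
  assumes S: "S \<subseteq> cont_ops P"
    and bound: "\<And>n. \<exists>q. dominated q \<and> (\<forall>B\<in>S. \<forall>x. P n (B x) \<le> q x)"
  shows "equicontinuous P S"
  unfolding equicontinuous_def
proof (intro conjI S ballI)
  fix p assume "p \<in> cont_seminorms P"
  then obtain m C where C: "C \<ge> 0" "\<And>x. p x \<le> C * seminorm_upto m x"
    using cont_seminorms_dominated unfolding dominated_def by blast
  obtain q where "\<forall>n. dominated (q n) \<and> (\<forall>B\<in>S. \<forall>x. P n (B x) \<le> q n x)"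
    using choice[of "\<lambda>n q. dominated q \<and> (\<forall>B\<in>S. \<forall>x. P n (B x) \<le> q x)"] bound by blast
  then have q: "\<And>n. dominated (q n)" "\<And>n B x. B \<in> S \<Longrightarrow> P n (B x) \<le> q n x"
    by blast+
  obtain M C' where C': "C' \<ge> 0" "\<And>x. (\<Sum>k\<le>m. q k x) \<le> C' * seminorm_upto M x"
    using dominated_sum[of "{..m}" q] q(1) unfolding dominated_def by blast
  have "p (B x) \<le> (C * C') * seminorm_upto M x" if "B \<in> S" for B x
  proof -
    have "(\<Sum>k\<le>m. P k (B x)) \<le> C' * seminorm_upto M x"
      using q(2)[OF that] C'(2)[of x] by (meson order_trans sum_mono)
    then have "C * seminorm_upto m (B x) \<le> C * (C' * seminorm_upto M x)"
      using C(1) by (simp add: seminorm_upto_def mult_left_mono)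
    then show ?thesis using C(2)[of "B x"] by (simp add: mult.assoc)
  qed
  moreover have "seminorm_upto M \<in> cont_seminorms P"
    by (simp add: cont_seminormsI seminorm_upto dominated_seminorm_upto)
  ultimately show "\<exists>q\<in>cont_seminorms P. \<exists>C\<ge>0. \<forall>B\<in>S. \<forall>x. p (B x) \<le> C * q x"
    using C(1) C'(1) by (intro bexI[of _ "seminorm_upto M"] exI[of _ "C * C'"]) auto
qed

lemma seminorm_limitin_le:
  assumes lim: "limitin (seminorm_topology P) f y F" and "F \<noteq> bot"
    and q: "seminorm q" "dominated q"
    and bound: "eventually (\<lambda>i. q (f i) \<le> b i) F" and b: "(b \<longlongrightarrow> \<beta>) F"
  shows "q y \<le> \<beta>"
proof -
  have "((\<lambda>i. b i + q (f i - y)) \<longlongrightarrow> \<beta> + 0) F"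
    using b limitin_dominated[OF lim q] by (rule tendsto_add)
  moreover have "eventually (\<lambda>i. q y \<le> b i + q (f i - y)) F"
    using bound
  proof (rule eventually_mono)
    fix i assume "q (f i) \<le> b i"
    then show "q y \<le> b i + q (f i - y)"
      using seminorm_triangle[OF q(1), of y 0 "f i"] seminorm_minus_commute[OF q(1), of y "f i"]
      by simp
  qed
  ultimately show ?thesis
    using \<open>F \<noteq> bot\<close> by (intro tendsto_lowerbound) (simp_all add: trivial_limit_def)
qed

end

locale frechet_space =
  fixes P :: "nat \<Rightarrow> 'a::cvector \<Rightarrow> real"
  assumes frechet: "frechet P"

sublocale frechet_space \<subseteq> seminorm_family
  using frechet by unfold_locales (simp add: frechet_def)

context frechet_space
begin

lemma limitin_unique:
  assumes "limitin (seminorm_topology P) f y F" "limitin (seminorm_topology P) f z F" "F \<noteq> bot"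
  shows "y = z"
proof -
  have "P n (y - z) = 0" for n
  proof -
    have "((\<lambda>i. P n (f i - z) + P n (f i - y)) \<longlongrightarrow> 0 + 0) F"
      using assms(1,2) unfolding limitin_seminorm_topology_tendsto by (intro tendsto_add) auto
    moreover have "P n (y - z) \<le> P n (f i - z) + P n (f i - y)" for i
      using seminorm_triangle[OF seminorm_P, of n y z "f i"]
        seminorm_minus_commute[OF seminorm_P, of n y "f i"] by linarith
    then have "eventually (\<lambda>i. P n (y - z) \<le> P n (f i - z) + P n (f i - y)) F"
      by (intro always_eventually allI)
    ultimately have "P n (y - z) \<le> 0"
      using \<open>F \<noteq> bot\<close> by (intro tendsto_lowerbound) (simp_all add: trivial_limit_def)
    then show ?thesis using seminorm_nonneg[OF seminorm_P, of n "y - z"] by simp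
  qed
  then show ?thesis using frechet unfolding frechet_def by (metis eq_iff_diff_eq_0)
qed

lemma cauchy_imp_limitin:
  assumes "\<And>n e. e > 0 \<Longrightarrow> \<exists>N. \<forall>k\<ge>N. \<forall>l\<ge>N. P n (f k - f l) < e"
  shows "\<exists>y. limitin (seminorm_topology P) f y sequentially"
  using frechet assms unfolding frechet_def by blast

end

section \<open>Exponentially equicontinuous semigroups\<close>

locale equicontinuous_semigroup = frechet_space P
  for P :: "nat \<Rightarrow> 'a::cvector \<Rightarrow> real" +
  fixes T :: "real \<Rightarrow> 'a \<Rightarrow> 'a" and \<omega> :: real
  assumes C0: "C0_semigroup P T" and exp_equicont: "exp_equicont_order P T \<omega>"
begin

lemma T_cont_ops: "t \<ge> 0 \<Longrightarrow> T t \<in> cont_ops P"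
  using C0 by (simp add: C0_semigroup_def)

lemma T_clinear: "t \<ge> 0 \<Longrightarrow> clinear_map (T t)"
  using T_cont_ops by (simp add: cont_ops_def)

lemma T_0 [simp]: "T 0 x = x"
  using C0 by (simp add: C0_semigroup_def)

lemma T_add: "s \<ge> 0 \<Longrightarrow> t \<ge> 0 \<Longrightarrow> T (s + t) x = T s (T t x)"
  using C0 by (simp add: C0_semigroup_def)

lemma T_commute: "s \<ge> 0 \<Longrightarrow> t \<ge> 0 \<Longrightarrow> T s (T t x) = T t (T s x)"
  by (metis T_add add.commute)

lemma limitin_T_at_right_0: "limitin (seminorm_topology P) (\<lambda>t. T t x) x (at_right 0)"
proof -
  have "continuous_map (top_of_set {0..}) (seminorm_topology P) (\<lambda>t. T t x)"
    using C0 by (simp add: C0_semigroup_def)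
  then have "limitin (seminorm_topology P) (\<lambda>t. T t x) x (atin_within euclideanreal 0 {0..})"
    using limit_continuous_map_within[of euclideanreal "{0..}" _ "\<lambda>t. T t x" 0] by simp
  moreover have "at_right 0 \<le> atin_within euclideanreal 0 {0..}"
    by (auto simp: le_filter_def eventually_atin_within eventually_at_topological)
  ultimately show ?thesis
    unfolding limitin_seminorm_topology by (blast intro: filter_leD)
qed

text \<open>The seminorms \<open>renormed n\<close> are equivalent to the given ones and make
  \<open>exp (- \<omega> t) T t\<close> contractive.\<close>

definition renormed :: "nat \<Rightarrow> 'a \<Rightarrow> real" where
  "renormed n x = (SUP t\<in>{0..}. exp (- \<omega> * t) * P n (T t x))"

lemma exp_T_bound:
  obtains m C where "C \<ge> 0" "\<And>t x. t \<ge> 0 \<Longrightarrow> exp (- \<omega> * t) * P n (T t x) \<le> C * seminorm_upto m x"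
proof -
  obtain m C where "C \<ge> 0"
    and bound: "\<And>B x. B \<in> (\<lambda>t x. of_real (exp (- \<omega> * t)) *\<^sub>C T t x) ` {0..}
      \<Longrightarrow> P n (B x) \<le> C * seminorm_upto m x"
    using equicontinuous_dominated exp_equicont unfolding exp_equicont_order_def by metis
  have "exp (- \<omega> * t) * P n (T t x) \<le> C * seminorm_upto m x" if "t \<ge> 0" for t x
    using bound[of "\<lambda>x. of_real (exp (- \<omega> * t)) *\<^sub>C T t x" x] that
    by (simp add: seminorm_scaleC[OF seminorm_P])
  with \<open>C \<ge> 0\<close> show thesis by (rule that)
qed

lemma renormed_upper: "t \<ge> 0 \<Longrightarrow> exp (- \<omega> * t) * P n (T t x) \<le> renormed n x"
proof -
  obtain m C where "\<And>t. t \<ge> 0 \<Longrightarrow> exp (- \<omega> * t) * P n (T t x) \<le> C * seminorm_upto m x"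
    using exp_T_bound by metis
  then have "bdd_above ((\<lambda>t. exp (- \<omega> * t) * P n (T t x)) ` {0..})"
    by (intro bdd_aboveI2) auto
  then show "t \<ge> 0 \<Longrightarrow> ?thesis"
    unfolding renormed_def by (intro cSUP_upper) auto
qed

lemma renormed_least: "(\<And>t. t \<ge> 0 \<Longrightarrow> exp (- \<omega> * t) * P n (T t x) \<le> M) \<Longrightarrow> renormed n x \<le> M"
  unfolding renormed_def by (rule cSUP_least) auto

lemma P_le_renormed: "P n x \<le> renormed n x"
  using renormed_upper[of 0 n x] by simp

lemma dominated_renormed: "dominated (renormed n)"
proof -
  obtain m C where "C \<ge> 0" "\<And>t x. t \<ge> 0 \<Longrightarrow> exp (- \<omega> * t) * P n (T t x) \<le> C * seminorm_upto m x"
    using exp_T_bound by metis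
  then show ?thesis by (intro dominatedI[of C _ m]) (simp_all add: renormed_least)
qed

lemma renormed_add: "renormed n (x + y) \<le> renormed n x + renormed n y"
proof (rule renormed_least)
  fix t :: real assume t: "t \<ge> 0"
  have "exp (- \<omega> * t) * P n (T t (x + y)) \<le> exp (- \<omega> * t) * (P n (T t x) + P n (T t y))"
    using seminorm_add[OF seminorm_P] by (simp add: clinear_map_add[OF T_clinear[OF t]])
  also have "\<dots> \<le> renormed n x + renormed n y"
    using renormed_upper[OF t] by (simp add: distrib_left add_mono)
  finally show "exp (- \<omega> * t) * P n (T t (x + y)) \<le> renormed n x + renormed n y" .
qed

lemma renormed_scaleC_le: "renormed n (c *\<^sub>C x) \<le> cmod c * renormed n x"
proof (rule renormed_least)
  fix t :: real assume t: "t \<ge> 0"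
  show "exp (- \<omega> * t) * P n (T t (c *\<^sub>C x)) \<le> cmod c * renormed n x"
    using renormed_upper[OF t, of n x]
    by (simp add: clinear_map_scaleC[OF T_clinear[OF t]] seminorm_scaleC[OF seminorm_P]
        mult.left_commute mult_left_mono)
qed

lemma seminorm_renormed: "seminorm (renormed n)"
  unfolding seminorm_def
proof (intro conjI allI renormed_add order.antisym renormed_scaleC_le)
  fix c x
  show "cmod c * renormed n x \<le> renormed n (c *\<^sub>C x)"
  proof (cases "c = 0")
    case True
    then show ?thesis
      using renormed_scaleC_le[of n 0 x] P_le_renormed[of n "0 *\<^sub>C x"]
        seminorm_zero[OF seminorm_P] by simp
  next
    case False
    then have "renormed n x \<le> cmod (inverse c) * renormed n (c *\<^sub>C x)"
      using renormed_scaleC_le[of n "inverse c" "c *\<^sub>C x"] by (simp add: scaleC_scaleC scaleC_one)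
    with False show ?thesis by (simp add: norm_divide field_simps)
  qed
qed

lemma renormed_T_le: "s \<ge> 0 \<Longrightarrow> renormed n (T s x) \<le> exp (\<omega> * s) * renormed n x"
proof (rule renormed_least)
  fix t :: real assume s: "s \<ge> 0" and t: "t \<ge> 0"
  have "exp (- \<omega> * t) * P n (T t (T s x))
      = exp (\<omega> * s) * (exp (- \<omega> * (t + s)) * P n (T (t + s) x))"
    using T_add[OF t s] by (simp add: exp_add[symmetric] algebra_simps)
  also have "\<dots> \<le> exp (\<omega> * s) * renormed n x"
    using renormed_upper[of "t + s"] s t by (simp add: mult_left_mono)
  finally show "exp (- \<omega> * t) * P n (T t (T s x)) \<le> exp (\<omega> * s) * renormed n x" .
qed

end

lemma one_minus_mult_sum_power:
  fixes q :: real
  assumes "i \<le> j"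
  shows "(1 - q) * (\<Sum>k\<in>{i..<j}. q ^ k) = q ^ i - q ^ j"
  using assms
proof (induction j)
  case (Suc j)
  show ?case
  proof (cases "i = Suc j")
    case False
    with Suc.prems have "i \<le> j" by simp
    then have "(\<Sum>k\<in>{i..<Suc j}. q ^ k) = (\<Sum>k\<in>{i..<j}. q ^ k) + q ^ j"
      by (simp add: sum.atLeastLessThan_Suc)
    then have "(1 - q) * (\<Sum>k\<in>{i..<Suc j}. q ^ k)
        = (1 - q) * (\<Sum>k\<in>{i..<j}. q ^ k) + (q ^ j - q ^ Suc j)"
      by (simp add: algebra_simps)
    then show ?thesis using Suc.IH[OF \<open>i \<le> j\<close>] by simp
  qed simp
qed simp

text \<open>A left Riemann sum of \<open>t \<mapsto> exp (- a * t)\<close> over \<open>[i d, j d]\<close> exceeds the integral by at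
  most the first term, which is at most \<open>d\<close>.\<close>

lemma riemann_sum_exp_le:
  fixes d a :: real
  assumes d: "0 < d" and a: "0 < a"
  shows "(\<Sum>k\<in>{i..<j}. d * exp (- a * (real k * d))) \<le> exp (- a * (real i * d)) * (d + 1 / a)"
proof (cases "i \<le> j")
  case False
  then show ?thesis using d a by (simp add: add_pos_pos less_imp_le)
next
  case True
  define q where "q = exp (- a * d)"
  have q: "0 < q" "q < 1" using d a by (auto simp: q_def)
  have power: "exp (- a * (real k * d)) = q ^ k" for k
    by (simp add: q_def exp_of_nat_mult[symmetric] mult_ac)
  have "(\<Sum>k\<in>{i..<j}. q ^ k) = (q ^ i - q ^ j) / (1 - q)"
    using one_minus_mult_sum_power[OF True, of q] q by (simp add: field_simps)
  also have "\<dots> \<le> q ^ i / (1 - q)" using q by (simp add: divide_right_mono)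
  finally have "d * (\<Sum>k\<in>{i..<j}. q ^ k) \<le> d * (q ^ i / (1 - q))"
    using d by (intro mult_left_mono) auto
  then have sum: "(\<Sum>k\<in>{i..<j}. d * q ^ k) \<le> q ^ i * (d / (1 - q))"
    by (simp add: sum_distrib_left mult.commute)
  have "(1 + a * d) * q \<le> exp (a * d) * q"
    using q exp_ge_add_one_self[of "a * d"] by simp
  also have "\<dots> = 1" by (simp add: q_def exp_minus_inverse)
  finally have "d \<le> (d + 1 / a) * (1 - q)" using a by (simp add: field_simps)
  then have "d / (1 - q) \<le> d + 1 / a" using q by (simp add: divide_le_eq)
  with sum q have "(\<Sum>k\<in>{i..<j}. d * q ^ k) \<le> q ^ i * (d + 1 / a)"
    by (meson order_trans mult_left_mono zero_le_power less_imp_le)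
  then show ?thesis by (simp only: power)
qed

lemma real_quotient_remainder:
  fixes h d :: real
  assumes "h \<ge> 0" "d > 0"
  obtains j :: nat and r where "h = real j * d + r" "0 \<le> r" "r < d"
proof -
  define j where "j = nat \<lfloor>h / d\<rfloor>"
  have "real j = of_int \<lfloor>h / d\<rfloor>" using assms by (simp add: j_def)
  then have "real j \<le> h / d" "h / d < real j + 1" by linarith+
  then have "0 \<le> h - real j * d" "h - real j * d < d"
    using assms by (simp_all add: pos_le_divide_eq pos_divide_less_eq algebra_simps)
  then show thesis by (intro that[of j "h - real j * d"]) simp_all
qed

text \<open>The Laplace integral over \<open>[0, N]\<close> is approximated by left Riemann sums with \<open>nodes N\<close>
  steps of length \<open>mesh N\<close>; the meshes are dyadic, so that the grid of step \<open>N\<close> refines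
  the grids of all earlier steps.\<close>

definition mesh :: "nat \<Rightarrow> real" where
  "mesh N = (1 / 2) ^ N"

definition nodes :: "nat \<Rightarrow> nat" where
  "nodes N = N * 2 ^ N"

lemma mesh_pos: "mesh N > 0"
  by (simp add: mesh_def)

lemma mesh_le_one: "mesh N \<le> 1"
  by (simp add: mesh_def power_le_one)

lemma mesh_refine: "N \<le> M \<Longrightarrow> real (2 ^ (M - N)) * mesh M = mesh N"
proof -
  assume "N \<le> M"
  then have "mesh M = (1 / 2) ^ (M - N) * mesh N"
    unfolding mesh_def by (metis le_add_diff_inverse2 power_add)
  then show ?thesis by (simp add: power_one_over)
qed

lemma nodes_mesh: "real (nodes N) * mesh N = real N"
  by (simp add: nodes_def mesh_def power_one_over)

lemma mesh_tendsto_0: "mesh \<longlonglongrightarrow> 0"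
  unfolding mesh_def by (rule LIMSEQ_power_zero) simp

lemma exp_neg_linear_tendsto_0: "a > 0 \<Longrightarrow> (\<lambda>N. exp (- a * real N)) \<longlonglongrightarrow> 0"
  using LIMSEQ_power_zero[of "exp (- a)"] by (simp add: exp_of_nat_mult[symmetric] mult.commute)

lemma exp_difference_quotient_tendsto:
  fixes c :: complex
  shows "((\<lambda>h::real. (exp (c * of_real h) - 1) / of_real h) \<longlongrightarrow> c) (at_right 0)"
proof -
  have "DERIV (\<lambda>z. exp (c * z)) 0 :> c"
    by (auto intro!: derivative_eq_intros)
  then have "((\<lambda>z. (exp (c * z) - 1) / z) \<longlongrightarrow> c) (at 0)"
    using DERIV_D by fastforce
  moreover have "filterlim complex_of_real (at 0) (at_right 0)"
    unfolding filterlim_at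
    by (auto intro!: tendsto_eq_intros eventually_mono[OF eventually_at_right_less])
  ultimately show ?thesis by (rule filterlim_compose)
qed

lemma filterlim_mesh_at_right_0: "filterlim mesh (at_right 0) sequentially"
  using mesh_tendsto_0 mesh_pos by (auto intro: tendsto_imp_filterlim_at_right)

section \<open>The Laplace transform of the semigroup\<close>

locale laplace_transform = equicontinuous_semigroup +
  fixes l :: complex
  assumes growth_less: "\<omega> < Re l"
begin

definition gap :: real where
  "gap = Re l - \<omega>"

lemma gap_pos: "gap > 0"
  using growth_less by (simp add: gap_def)

definition damped :: "real \<Rightarrow> 'a \<Rightarrow> 'a" where
  "damped t x = exp (- (l * of_real t)) *\<^sub>C T t x"

lemma damped_0 [simp]: "damped 0 x = x"
  by (simp add: damped_def scaleC_one)

lemma damped_clinear: "t \<ge> 0 \<Longrightarrow> clinear_map (damped t)"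
  using T_clinear[of t]
  by (simp add: clinear_map_def damped_def scaleC_add_right scaleC_left_commute)

lemma damped_add: "s \<ge> 0 \<Longrightarrow> t \<ge> 0 \<Longrightarrow> damped (s + t) x = damped s (damped t x)"
proof -
  assume s: "s \<ge> 0" and t: "t \<ge> 0"
  have "exp (- (l * of_real (s + t))) = exp (- (l * of_real s)) * exp (- (l * of_real t))"
    by (simp add: exp_add[symmetric] algebra_simps)
  then show ?thesis
    by (simp add: damped_def T_add[OF s t] clinear_map_scaleC[OF T_clinear[OF s]] scaleC_scaleC)
qed

lemma damped_T: "t \<ge> 0 \<Longrightarrow> s \<ge> 0 \<Longrightarrow> damped t (T s x) = T s (damped t x)"
  by (simp add: damped_def T_commute clinear_map_scaleC[OF T_clinear])

lemma renormed_damped_le: "t \<ge> 0 \<Longrightarrow> renormed n (damped t x) \<le> exp (- gap * t) * renormed n x"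
proof -
  assume t: "t \<ge> 0"
  have "renormed n (damped t x) = exp (- (Re l * t)) * renormed n (T t x)"
    by (simp add: damped_def seminorm_scaleC[OF seminorm_renormed])
  also have "\<dots> \<le> exp (- (Re l * t)) * (exp (\<omega> * t) * renormed n x)"
    using renormed_T_le[OF t] by (simp add: mult_left_mono)
  also have "\<dots> = exp (- gap * t) * renormed n x"
    by (simp add: gap_def mult_exp_exp algebra_simps)
  finally show ?thesis .
qed

lemma renormed_damped_diff_le: "t \<ge> 0 \<Longrightarrow> renormed n (damped t x - x) \<le> 2 * renormed n x"
  using seminorm_diff_le[OF seminorm_renormed, of n "damped t x" x] renormed_damped_le[of t n x]
    mult_right_mono[of "exp (- gap * t)" 1 "renormed n x"] gap_pos
    seminorm_nonneg[OF seminorm_renormed, of n x]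
  by (simp add: mult_nonneg_nonneg)

lemma renormed_damped_diff_tendsto_0: "((\<lambda>t. renormed n (damped t x - x)) \<longlongrightarrow> 0) (at_right 0)"
proof -
  define c where "c t = exp (- (l * of_real t))" for t :: real
  have "damped t x - x = c t *\<^sub>C (T t x - x) + (c t - 1) *\<^sub>C x" for t
    by (simp add: damped_def c_def scaleC_diff_right scaleC_diff_left scaleC_one)
  then have le: "renormed n (damped t x - x)
      \<le> cmod (c t) * renormed n (T t x - x) + cmod (c t - 1) * renormed n x" for t
    using seminorm_add[OF seminorm_renormed, of n "c t *\<^sub>C (T t x - x)" "(c t - 1) *\<^sub>C x"]
    by (simp add: seminorm_scaleC[OF seminorm_renormed])
  have "(c \<longlongrightarrow> exp (- (l * of_real 0))) (at_right 0)"
    unfolding c_def by (intro tendsto_intros)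
  then have "(c \<longlongrightarrow> 1) (at_right 0)" by simp
  then have "((\<lambda>t. cmod (c t) * renormed n (T t x - x) + cmod (c t - 1) * renormed n x)
      \<longlongrightarrow> cmod 1 * 0 + cmod (1 - 1) * renormed n x) (at_right 0)"
    by (intro tendsto_intros limitin_dominated[OF limitin_T_at_right_0]
        seminorm_renormed dominated_renormed)
  then have "((\<lambda>t. cmod (c t) * renormed n (T t x - x) + cmod (c t - 1) * renormed n x)
      \<longlongrightarrow> 0) (at_right 0)"
    by simp
  from tendsto_sandwich[OF _ _ tendsto_const this] show ?thesis
    by (simp add: le seminorm_nonneg[OF seminorm_renormed])
qed

definition oscillation :: "nat \<Rightarrow> 'a \<Rightarrow> real \<Rightarrow> real" where
  "oscillation n x d = (SUP t\<in>{0..d}. renormed n (damped t x - x))"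

lemma oscillation_upper: "0 \<le> t \<Longrightarrow> t \<le> d \<Longrightarrow> renormed n (damped t x - x) \<le> oscillation n x d"
  unfolding oscillation_def
  by (rule cSUP_upper) (auto intro!: bdd_aboveI2[where M = "2 * renormed n x"] renormed_damped_diff_le)

lemma oscillation_tendsto_0: "(oscillation n x \<longlongrightarrow> 0) (at_right 0)"
proof (rule order_tendstoI)
  fix a :: real assume "a < 0"
  show "eventually (\<lambda>d. a < oscillation n x d) (at_right 0)"
    using eventually_at_right_less[of 0]
  proof (rule eventually_mono)
    fix d :: real assume "0 < d"
    then show "a < oscillation n x d"
      using oscillation_upper[of 0 d n x] \<open>a < 0\<close> seminorm_zero[OF seminorm_renormed] by simp
  qed
next
  fix a :: real assume "0 < a"
  then have "eventually (\<lambda>t. renormed n (damped t x - x) < a / 2) (at_right 0)"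
    using renormed_damped_diff_tendsto_0 by (intro order_tendstoD(2)) auto
  then obtain b where "b > 0" and b: "\<And>t. 0 < t \<Longrightarrow> t < b \<Longrightarrow> renormed n (damped t x - x) < a / 2"
    unfolding eventually_at_right_field by auto
  have "oscillation n x d < a" if "0 < d" "d < b" for d
  proof -
    have "renormed n (damped t x - x) \<le> a / 2" if "0 \<le> t" "t \<le> d" for t
      using b[of t] \<open>d < b\<close> \<open>0 < a\<close> that seminorm_zero[OF seminorm_renormed]
      by (cases "t = 0") auto
    then have "oscillation n x d \<le> a / 2"
      unfolding oscillation_def using \<open>0 < d\<close> by (intro cSUP_least) auto
    then show ?thesis using \<open>0 < a\<close> by simp
  qed
  then show "eventually (\<lambda>d. oscillation n x d < a) (at_right 0)"
    unfolding eventually_at_right_field using \<open>b > 0\<close> by blast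
qed

lemma oscillation_mesh_tendsto_0: "(\<lambda>N. oscillation n x (mesh N)) \<longlonglongrightarrow> 0"
  using filterlim_compose[OF oscillation_tendsto_0 filterlim_mesh_at_right_0] by (simp add: o_def)

definition riemann_sum :: "nat \<Rightarrow> 'a \<Rightarrow> 'a" where
  "riemann_sum N x = (\<Sum>k<nodes N. of_real (mesh N) *\<^sub>C damped (real k * mesh N) x)"

lemma renormed_damped_sum_le:
  assumes "d > 0"
  shows "renormed n (\<Sum>k\<in>{i..<j}. of_real d *\<^sub>C damped (real k * d) y)
    \<le> exp (- gap * (real i * d)) * (d + 1 / gap) * renormed n y"
proof -
  have "renormed n (\<Sum>k\<in>{i..<j}. of_real d *\<^sub>C damped (real k * d) y)
      \<le> (\<Sum>k\<in>{i..<j}. renormed n (of_real d *\<^sub>C damped (real k * d) y))"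
    by (rule seminorm_sum_le[OF seminorm_renormed])
  also have "\<dots> \<le> (\<Sum>k\<in>{i..<j}. d * exp (- gap * (real k * d)) * renormed n y)"
    using assms renormed_damped_le
    by (intro sum_mono) (simp add: seminorm_scaleC[OF seminorm_renormed] mult_left_mono mult.assoc)
  also have "\<dots> = (\<Sum>k\<in>{i..<j}. d * exp (- gap * (real k * d))) * renormed n y"
    by (simp add: sum_distrib_right)
  also have "\<dots> \<le> exp (- gap * (real i * d)) * (d + 1 / gap) * renormed n y"
    by (intro mult_right_mono riemann_sum_exp_le assms gap_pos seminorm_nonneg[OF seminorm_renormed])
  finally show ?thesis .
qed

lemma renormed_riemann_sum_le: "renormed n (riemann_sum N x) \<le> (mesh N + 1 / gap) * renormed n x"
  using renormed_damped_sum_le[OF mesh_pos, where i = 0 and j = "nodes N" and y = x]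
  by (simp add: riemann_sum_def atLeast0LessThan)

lemma riemann_sum_clinear: "clinear_map (riemann_sum N)"
proof -
  have lin: "clinear_map (damped (real k * mesh N))" for k
    using damped_clinear mesh_pos by (simp add: less_imp_le)
  show ?thesis
    unfolding clinear_map_def riemann_sum_def
    by (simp add: clinear_map_add[OF lin] clinear_map_scaleC[OF lin] scaleC_add_right
        sum.distrib scaleC_sum_right scaleC_left_commute)
qed

lemma riemann_sum_T: "s \<ge> 0 \<Longrightarrow> riemann_sum N (T s x) = T s (riemann_sum N x)"
  using mesh_pos
  by (simp add: riemann_sum_def damped_T less_imp_le clinear_map_sum[OF T_clinear]
      clinear_map_scaleC[OF T_clinear])

lemma damped_block_average:
  fixes x :: 'a
  assumes em: "real m * e = d" and "m > 0" "e > 0"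
  shows "(\<Sum>j<m. of_real e *\<^sub>C damped (real (k * m + j) * e) x) - of_real d *\<^sub>C damped (real k * d) x
    = of_real d *\<^sub>C damped (real k * d) (\<Sum>j<m. of_real (1 / real m) *\<^sub>C (damped (real j * e) x - x))"
proof -
  let ?D = "damped (real k * d)"
  have "d > 0" using assms by (metis of_nat_0_less_iff mult_pos_pos)
  then have lin: "clinear_map ?D" using damped_clinear by simp
  have "damped (real (k * m + j) * e) x = ?D (damped (real j * e) x)" for j
  proof -
    have "real (k * m + j) * e = real k * d + real j * e"
      by (simp add: algebra_simps flip: em)
    then show ?thesis
      using \<open>d > 0\<close> \<open>e > 0\<close> by (simp add: damped_add)
  qed
  moreover have "complex_of_real d / of_nat m = of_real e"
    using \<open>m > 0\<close> by (simp flip: em)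
  then have "of_real d *\<^sub>C ?D (\<Sum>j<m. of_real (1 / real m) *\<^sub>C (damped (real j * e) x - x))
      = (\<Sum>j<m. of_real e *\<^sub>C (?D (damped (real j * e) x) - ?D x))"
    by (simp add: clinear_map_sum[OF lin] clinear_map_scaleC[OF lin]
        clinear_map_diff[OF lin] scaleC_sum_right scaleC_scaleC flip: of_real_mult)
  moreover have "of_real d *\<^sub>C ?D x = (\<Sum>j<m. of_real e *\<^sub>C ?D x)"
    by (simp add: scaleC_sum_left[symmetric] flip: em)
  ultimately show ?thesis
    by (simp add: scaleC_diff_right sum_subtractf)
qed

lemma riemann_sum_refine:
  fixes x :: 'a
  assumes "N \<le> M"
  defines "m \<equiv> 2 ^ (M - N) :: nat"
  defines "w \<equiv> (\<Sum>j<m. of_real (1 / real m) *\<^sub>C (damped (real j * mesh M) x - x))"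
  shows "riemann_sum M x - riemann_sum N x
    = (\<Sum>k<nodes N. of_real (mesh N) *\<^sub>C damped (real k * mesh N) w)
      + (\<Sum>k\<in>{nodes N * m..<nodes M}. of_real (mesh M) *\<^sub>C damped (real k * mesh M) x)"
proof -
  define d where "d k = of_real (mesh M) *\<^sub>C damped (real k * mesh M) x" for k
  have m: "real m * mesh M = mesh N" "m > 0"
    using mesh_refine[OF \<open>N \<le> M\<close>] by (simp_all add: m_def)
  have "nodes N * m = N * 2 ^ M"
    using \<open>N \<le> M\<close> by (simp add: nodes_def m_def mult.assoc power_add[symmetric])
  also have "\<dots> \<le> nodes M"
    using \<open>N \<le> M\<close> by (simp add: nodes_def)
  finally have "nodes N * m \<le> nodes M" .
  then have split: "riemann_sum M x = (\<Sum>k<nodes N * m. d k) + (\<Sum>k\<in>{nodes N * m..<nodes M}. d k)"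
    unfolding riemann_sum_def d_def atLeast0LessThan[symmetric]
    by (simp add: sum.atLeastLessThan_concat)
  have block: "(\<Sum>j<m. d (k * m + j)) - of_real (mesh N) *\<^sub>C damped (real k * mesh N) x
      = of_real (mesh N) *\<^sub>C damped (real k * mesh N) w" for k
    unfolding d_def w_def by (rule damped_block_average[OF m mesh_pos])
  have "(\<Sum>k<nodes N * m. d k) = (\<Sum>k<nodes N. sum d {k * m..<k * m + m})"
    by (rule sum.nat_group[symmetric])
  also have "\<dots> = (\<Sum>k<nodes N. \<Sum>j<m. d (k * m + j))"
    using sum.shift_bounds_nat_ivl[of d 0 "k * m" m for k]
    by (simp add: add.commute atLeast0LessThan)
  finally have "(\<Sum>k<nodes N * m. d k) = (\<Sum>k<nodes N. \<Sum>j<m. d (k * m + j))" .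
  then have "(\<Sum>k<nodes N * m. d k) - riemann_sum N x
      = (\<Sum>k<nodes N. of_real (mesh N) *\<^sub>C damped (real k * mesh N) w)"
    by (simp add: riemann_sum_def block[symmetric] sum_subtractf)
  with split show ?thesis by (simp add: d_def algebra_simps)
qed

lemma renormed_average_damped_diff_le:
  assumes "real m * e = d" "m > 0" "e > 0"
  shows "renormed n (\<Sum>j<m. of_real (1 / real m) *\<^sub>C (damped (real j * e) x - x))
    \<le> oscillation n x d"
proof -
  have "renormed n (\<Sum>j<m. of_real (1 / real m) *\<^sub>C (damped (real j * e) x - x))
      \<le> (\<Sum>j<m. (1 / real m) * renormed n (damped (real j * e) x - x))"
    using seminorm_sum_le[OF seminorm_renormed]
    by (rule order_trans) (simp add: seminorm_scaleC[OF seminorm_renormed] norm_divide)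
  also have "\<dots> \<le> (\<Sum>j<m. (1 / real m) * oscillation n x d)"
  proof (intro sum_mono mult_left_mono oscillation_upper)
    fix j assume "j \<in> {..<m}"
    then have "real j * e \<le> real m * e"
      using \<open>e > 0\<close> by (intro mult_right_mono) simp_all
    then show "real j * e \<le> d" using assms(1) by simp
  qed (use \<open>e > 0\<close> in simp_all)
  also have "\<dots> = oscillation n x d" using \<open>m > 0\<close> by simp
  finally show ?thesis .
qed

lemma renormed_riemann_sum_diff_le:
  assumes "N \<le> M"
  shows "renormed n (riemann_sum M x - riemann_sum N x)
    \<le> (mesh N + 1 / gap) * oscillation n x (mesh N)
      + exp (- gap * real N) * (mesh M + 1 / gap) * renormed n x"
proof -
  define m where "m = (2::nat) ^ (M - N)"
  define w where "w = (\<Sum>j<m. of_real (1 / real m) *\<^sub>C (damped (real j * mesh M) x - x))"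
  let ?S1 = "\<Sum>k<nodes N. of_real (mesh N) *\<^sub>C damped (real k * mesh N) w"
  let ?S2 = "\<Sum>k\<in>{nodes N * m..<nodes M}. of_real (mesh M) *\<^sub>C damped (real k * mesh M) x"
  have m: "real m * mesh M = mesh N" "m > 0"
    using mesh_refine[OF \<open>N \<le> M\<close>] by (simp_all add: m_def)
  have "renormed n ?S1 \<le> (mesh N + 1 / gap) * renormed n w"
    using renormed_damped_sum_le[OF mesh_pos[of N], where i = 0 and j = "nodes N" and y = w]
    by (simp add: atLeast0LessThan)
  also have "\<dots> \<le> (mesh N + 1 / gap) * oscillation n x (mesh N)"
    unfolding w_def using m mesh_pos[of M] mesh_pos[of N] gap_pos
    by (intro mult_left_mono renormed_average_damped_diff_le) (simp_all add: add_nonneg_nonneg)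
  finally have S1: "renormed n ?S1 \<le> (mesh N + 1 / gap) * oscillation n x (mesh N)" .
  have "real (nodes N * m) * mesh M = real N"
    using m(1) nodes_mesh[of N] by (simp add: mult.assoc)
  then have S2: "renormed n ?S2 \<le> exp (- gap * real N) * (mesh M + 1 / gap) * renormed n x"
    using renormed_damped_sum_le[OF mesh_pos[of M], where i = "nodes N * m" and j = "nodes M" and y = x]
    by simp
  have "riemann_sum M x - riemann_sum N x = ?S1 + ?S2"
    unfolding w_def m_def by (rule riemann_sum_refine[OF \<open>N \<le> M\<close>])
  with S1 S2 show ?thesis
    using seminorm_add[OF seminorm_renormed, of n ?S1 ?S2] by simp
qed

lemma damped_riemann_sum:
  "s \<ge> 0 \<Longrightarrow> damped s (riemann_sum N x)
    = (\<Sum>k<nodes N. of_real (mesh N) *\<^sub>C damped (s + real k * mesh N) x)"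
  using mesh_pos
  by (simp add: riemann_sum_def clinear_map_sum[OF damped_clinear]
      clinear_map_scaleC[OF damped_clinear] damped_add less_imp_le)

lemma riemann_sum_shift:
  fixes x :: 'a and N :: nat
  assumes "r \<ge> 0"
  defines "\<delta> \<equiv> mesh N"
  shows "damped (real j * \<delta> + r) (riemann_sum N x) - riemann_sum N x + of_real (real j * \<delta> + r) *\<^sub>C x
    = (\<Sum>k<nodes N + j. of_real \<delta> *\<^sub>C damped (real k * \<delta>) (damped r x - x))
      + (\<Sum>k\<in>{nodes N..<nodes N + j}. of_real \<delta> *\<^sub>C damped (real k * \<delta>) x)
      - (\<Sum>k<j. of_real \<delta> *\<^sub>C (damped (real k * \<delta> + r) x - x))
      + of_real r *\<^sub>C x"
proof -
  define K where "K = nodes N"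
  define a where "a k = of_real \<delta> *\<^sub>C damped (real k * \<delta> + r) x" for k
  define b where "b k = of_real \<delta> *\<^sub>C damped (real k * \<delta>) x" for k
  have \<delta>: "\<delta> > 0" using mesh_pos by (simp add: \<delta>_def)
  have jr: "real j * \<delta> + r \<ge> 0" using \<delta> \<open>r \<ge> 0\<close> by simp
  have "damped (real j * \<delta> + r) (riemann_sum N x) = (\<Sum>k<K. a (k + j))"
    unfolding damped_riemann_sum[OF jr] \<delta>_def[symmetric] a_def K_def
    by (intro sum.cong) (simp_all add: algebra_simps)
  also have "\<dots> = (\<Sum>k<K + j. a k) - (\<Sum>k<j. a k)"
    using sum.shift_bounds_nat_ivl[of a 0 j K] sum.atLeastLessThan_concat[of 0 j "K + j" a]
    by (simp add: atLeast0LessThan eq_diff_eq add.commute)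
  finally have shifted: "damped (real j * \<delta> + r) (riemann_sum N x)
      = (\<Sum>k<K + j. a k) - (\<Sum>k<j. a k)" .
  have unshifted: "riemann_sum N x = (\<Sum>k<K + j. b k) - (\<Sum>k\<in>{K..<K + j}. b k)"
    using sum.atLeastLessThan_concat[of 0 K "K + j" b]
    by (simp add: riemann_sum_def K_def \<delta>_def b_def atLeast0LessThan eq_diff_eq)
  have first: "of_real \<delta> *\<^sub>C damped (real k * \<delta>) (damped r x - x) = a k - b k" for k
    using \<delta> \<open>r \<ge> 0\<close>
    by (simp add: a_def b_def damped_add clinear_map_diff[OF damped_clinear] scaleC_diff_right)
  have third: "of_real \<delta> *\<^sub>C (damped (real k * \<delta> + r) x - x) = a k - of_real \<delta> *\<^sub>C x" for k
    by (simp add: a_def scaleC_diff_right)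
  have scaled: "of_real (real j * \<delta> + r) *\<^sub>C x = (\<Sum>k<j. of_real \<delta> *\<^sub>C x) + of_real r *\<^sub>C x"
    by (simp add: scaleC_sum_left[symmetric] scaleC_add_left)
  show ?thesis
    unfolding shifted unfolding unshifted first third scaled K_def[symmetric] b_def[symmetric]
    by (simp add: sum_subtractf algebra_simps)
qed

lemma renormed_sum_damped_diff_le:
  assumes d: "d > 0" and r: "0 \<le> r" and h: "real j * d + r \<le> h"
  shows "renormed n (\<Sum>k<j. of_real d *\<^sub>C (damped (real k * d + r) x - x)) \<le> h * oscillation n x h"
proof -
  have "renormed n (\<Sum>k<j. of_real d *\<^sub>C (damped (real k * d + r) x - x))
      \<le> (\<Sum>k<j. d * renormed n (damped (real k * d + r) x - x))"
    using seminorm_sum_le[OF seminorm_renormed]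
    by (rule order_trans) (use d in \<open>simp add: seminorm_scaleC[OF seminorm_renormed]\<close>)
  also have "\<dots> \<le> (\<Sum>k<j. d * oscillation n x h)"
  proof (intro sum_mono mult_left_mono oscillation_upper)
    fix k assume "k \<in> {..<j}"
    then have "(real k + 1) * d \<le> real j * d"
      using d by (intro mult_right_mono) auto
    then show "real k * d + r \<le> h" using d h by (simp add: distrib_right)
  qed (use d r in simp_all)
  also have "\<dots> = (real j * d) * oscillation n x h"
    by (simp add: mult.assoc)
  also have "\<dots> \<le> h * oscillation n x h"
  proof (rule mult_right_mono)
    have "0 \<le> real j * d" using d by simp
    then show "real j * d \<le> h" "0 \<le> oscillation n x h"
      using oscillation_upper[of 0 h n x] r h seminorm_zero[OF seminorm_renormed] by simp_all
  qed
  finally show ?thesis .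
qed

lemma renormed_riemann_sum_shift_le:
  assumes "h > 0"
  shows "renormed n (damped h (riemann_sum N x) - riemann_sum N x + of_real h *\<^sub>C x)
    \<le> h * oscillation n x h + (mesh N + 1 / gap) * oscillation n x (mesh N)
      + exp (- gap * real N) * (mesh N + 1 / gap) * renormed n x + mesh N * renormed n x"
proof -
  define \<delta> where "\<delta> = mesh N"
  have \<delta>: "\<delta> > 0" by (simp add: \<delta>_def mesh_pos)
  obtain j r where h: "h = real j * \<delta> + r" and r: "0 \<le> r" "r < \<delta>"
    using real_quotient_remainder[of h \<delta>] \<open>h > 0\<close> \<delta> by auto
  let ?R = "\<lambda>y. renormed n y"
  have A: "?R (\<Sum>k<nodes N + j. of_real \<delta> *\<^sub>C damped (real k * \<delta>) (damped r x - x))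
      \<le> (\<delta> + 1 / gap) * oscillation n x \<delta>"
  proof -
    have "?R (\<Sum>k<nodes N + j. of_real \<delta> *\<^sub>C damped (real k * \<delta>) (damped r x - x))
        \<le> (\<delta> + 1 / gap) * ?R (damped r x - x)"
      using renormed_damped_sum_le[OF \<delta>, where i = 0 and j = "nodes N + j"]
      by (simp add: atLeast0LessThan)
    also have "\<dots> \<le> (\<delta> + 1 / gap) * oscillation n x \<delta>"
      using r \<delta> gap_pos by (intro mult_left_mono oscillation_upper) simp_all
    finally show ?thesis .
  qed
  have B: "?R (\<Sum>k\<in>{nodes N..<nodes N + j}. of_real \<delta> *\<^sub>C damped (real k * \<delta>) x)
      \<le> exp (- gap * real N) * (\<delta> + 1 / gap) * ?R x"
    using renormed_damped_sum_le[OF \<delta>, where i = "nodes N" and j = "nodes N + j"] nodes_mesh[of N]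
    by (simp add: \<delta>_def)
  have C: "?R (\<Sum>k<j. of_real \<delta> *\<^sub>C (damped (real k * \<delta> + r) x - x)) \<le> h * oscillation n x h"
    using \<delta> r h by (intro renormed_sum_damped_diff_le) simp_all
  have D: "?R (of_real r *\<^sub>C x) \<le> \<delta> * ?R x"
    using r seminorm_nonneg[OF seminorm_renormed]
    by (simp add: seminorm_scaleC[OF seminorm_renormed]) (intro mult_right_mono, simp_all)
  let ?S1 = "\<Sum>k<nodes N + j. of_real \<delta> *\<^sub>C damped (real k * \<delta>) (damped r x - x)"
  let ?S2 = "\<Sum>k\<in>{nodes N..<nodes N + j}. of_real \<delta> *\<^sub>C damped (real k * \<delta>) x"
  let ?S3 = "\<Sum>k<j. of_real \<delta> *\<^sub>C (damped (real k * \<delta> + r) x - x)"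
  have decomposition: "damped h (riemann_sum N x) - riemann_sum N x + of_real h *\<^sub>C x
      = ?S1 + ?S2 - ?S3 + of_real r *\<^sub>C x"
    unfolding h \<delta>_def by (rule riemann_sum_shift[OF r(1)])
  have "?R (damped h (riemann_sum N x) - riemann_sum N x + of_real h *\<^sub>C x)
      \<le> ?R ?S1 + ?R ?S2 + ?R ?S3 + ?R (of_real r *\<^sub>C x)"
    unfolding decomposition
    using seminorm_add[OF seminorm_renormed, of n "?S1 + ?S2 - ?S3" "of_real r *\<^sub>C x"]
      seminorm_diff_le[OF seminorm_renormed, of n "?S1 + ?S2" ?S3]
      seminorm_add[OF seminorm_renormed, of n ?S1 ?S2]
    by linarith
  with A B C D show ?thesis by (simp add: \<delta>_def)
qed

definition laplace :: "'a \<Rightarrow> 'a" where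
  "laplace x = (SOME y. limitin (seminorm_topology P) (\<lambda>N. riemann_sum N x) y sequentially)"

lemma limitin_laplace: "limitin (seminorm_topology P) (\<lambda>N. riemann_sum N x) (laplace x) sequentially"
proof -
  define b where "b n N = (mesh N + 1 / gap) * oscillation n x (mesh N)
    + exp (- gap * real N) * (1 + 1 / gap) * renormed n x" for n N
  have "b n \<longlonglongrightarrow> (0 + 1 / gap) * 0 + 0 * (1 + 1 / gap) * renormed n x" for n
    unfolding b_def
    by (intro tendsto_intros mesh_tendsto_0 oscillation_mesh_tendsto_0
        exp_neg_linear_tendsto_0 gap_pos)
  then have b: "b n \<longlonglongrightarrow> 0" for n by simp
  have "renormed n (riemann_sum M x - riemann_sum N x) \<le> b n N" if "N \<le> M" for n N M
  proof -
    have "exp (- gap * real N) * (mesh M + 1 / gap) * renormed n x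
        \<le> exp (- gap * real N) * (1 + 1 / gap) * renormed n x"
      using mesh_le_one[of M] seminorm_nonneg[OF seminorm_renormed, of n x]
      by (intro mult_right_mono mult_left_mono) simp_all
    then show ?thesis
      unfolding b_def using renormed_riemann_sum_diff_le[OF that, of n x] by linarith
  qed
  then have "\<exists>N. \<forall>k\<ge>N. \<forall>l\<ge>N. P n (riemann_sum k x - riemann_sum l x) < e" if "e > 0" for n e
    using seminorm_cauchyI[OF seminorm_renormed _ b \<open>e > 0\<close>]
    by (meson P_le_renormed le_less_trans)
  then show ?thesis
    unfolding laplace_def by (rule someI_ex[OF cauchy_imp_limitin])
qed

lemma laplace_unique:
  "limitin (seminorm_topology P) (\<lambda>N. riemann_sum N x) y sequentially \<Longrightarrow> laplace x = y"
  using limitin_laplace by (rule limitin_unique) (simp_all add: trivial_limit_sequentially)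

lemma laplace_clinear: "clinear_map laplace"
  unfolding clinear_map_def
proof (intro conjI allI)
  fix x y
  show "laplace (x + y) = laplace x + laplace y"
    using limitin_add[OF limitin_laplace limitin_laplace]
    by (intro laplace_unique) (simp add: clinear_map_add[OF riemann_sum_clinear])
next
  fix c x
  show "laplace (c *\<^sub>C x) = c *\<^sub>C laplace x"
    using limitin_scaleC[OF tendsto_const limitin_laplace]
    by (intro laplace_unique) (simp add: clinear_map_scaleC[OF riemann_sum_clinear])
qed

lemma limitin_T:
  assumes "s \<ge> 0" and "limitin (seminorm_topology P) f y F"
  shows "limitin (seminorm_topology P) (\<lambda>i. T s (f i)) (T s y) F"
proof -
  have "continuous_map (seminorm_topology P) (seminorm_topology P) (T s)"
    using T_cont_ops[OF \<open>s \<ge> 0\<close>] by (simp add: cont_ops_def)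
  from continuous_map_limit[OF this assms(2)] show ?thesis by (simp add: o_def)
qed

lemma laplace_T: "s \<ge> 0 \<Longrightarrow> laplace (T s x) = T s (laplace x)"
  using limitin_T[OF _ limitin_laplace] by (intro laplace_unique) (simp add: riemann_sum_T)

lemma renormed_laplace_le: "renormed n (laplace x) \<le> renormed n x / gap"
proof (rule seminorm_limitin_le[OF limitin_laplace _ seminorm_renormed dominated_renormed])
  show "\<forall>\<^sub>F N in sequentially. renormed n (riemann_sum N x) \<le> (mesh N + 1 / gap) * renormed n x"
    by (simp add: renormed_riemann_sum_le)
  have "(\<lambda>N. (mesh N + 1 / gap) * renormed n x) \<longlonglongrightarrow> (0 + 1 / gap) * renormed n x"
    by (intro tendsto_intros mesh_tendsto_0)
  then show "(\<lambda>N. (mesh N + 1 / gap) * renormed n x) \<longlonglongrightarrow> renormed n x / gap"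
    by simp
qed simp

lemma renormed_laplace_power_le: "renormed n ((laplace ^^ k) x) \<le> renormed n x / gap ^ k"
proof (induction k)
  case (Suc k)
  have "renormed n ((laplace ^^ Suc k) x) \<le> renormed n ((laplace ^^ k) x) / gap"
    by (simp add: renormed_laplace_le)
  also have "\<dots> \<le> (renormed n x / gap ^ k) / gap"
    using Suc.IH gap_pos by (intro divide_right_mono) simp_all
  also have "\<dots> = renormed n x / gap ^ Suc k"
    by (simp add: divide_divide_eq_left mult.commute)
  finally show ?case .
qed simp

lemma laplace_cont_ops: "laplace \<in> cont_ops P"
proof (rule cont_opsI[OF laplace_clinear])
  fix n
  show "dominated (\<lambda>x. P n (laplace x))"
  proof (rule dominated_le[OF dominated_renormed, of "1 / gap"])
    fix x
    show "P n (laplace x) \<le> 1 / gap * renormed n x"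
      using P_le_renormed[of n "laplace x"] renormed_laplace_le[of n x] by simp
  qed (use gap_pos in simp)
qed

text \<open>The powers of \<open>gap * laplace\<close> are contractions for every seminorm \<open>renormed n\<close>.\<close>

lemma laplace_L0: "laplace \<in> L0 P"
  unfolding L0_def
proof (intro CollectI conjI laplace_cont_ops exI[of _ "of_real gap"])
  show "complex_of_real gap \<noteq> 0" using gap_pos by simp
  define B where "B k x = (of_real gap ^ k) *\<^sub>C (laplace ^^ k) x" for k x
  have renormed_B: "renormed n (B k x) \<le> renormed n x" for n k x
    using renormed_laplace_power_le[of n k x] gap_pos
    by (simp add: B_def seminorm_scaleC[OF seminorm_renormed] norm_power field_simps)
  have lin: "clinear_map (B k)" for k
  proof -
    have L: "clinear_map (laplace ^^ k)" by (rule clinear_map_funpow[OF laplace_clinear])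
    then show ?thesis
      by (simp add: clinear_map_def B_def clinear_map_add[OF L] clinear_map_scaleC[OF L]
          scaleC_add_right scaleC_left_commute)
  qed
  have P_B: "P n (B k x) \<le> renormed n x" for n k x
    using P_le_renormed renormed_B by (rule order_trans)
  have "equicontinuous P (range B)"
  proof (rule equicontinuousI)
    show "range B \<subseteq> cont_ops P"
    proof (intro subsetI, elim rangeE)
      fix C k assume "C = B k"
      have "dominated (\<lambda>x. P n (B k x))" for n
        by (rule dominated_le[OF dominated_renormed[of n], of 1]) (simp_all add: P_B)
      then show "C \<in> cont_ops P" using lin \<open>C = B k\<close> by (simp add: cont_opsI)
    qed
    show "\<exists>q. dominated q \<and> (\<forall>C\<in>range B. \<forall>x. P n (C x) \<le> q x)" for n
      using dominated_renormed P_B by blast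
  qed
  then show "equicontinuous P (range (\<lambda>k x. of_real gap ^ k *\<^sub>C (laplace ^^ k) x))"
    by (simp add: B_def[abs_def])
qed

lemma limitin_damped:
  "t \<ge> 0 \<Longrightarrow> limitin (seminorm_topology P) f y F
    \<Longrightarrow> limitin (seminorm_topology P) (\<lambda>i. damped t (f i)) (damped t y) F"
  unfolding damped_def by (intro limitin_scaleC[OF tendsto_const] limitin_T)

lemma renormed_laplace_shift_le:
  assumes "h > 0"
  shows "renormed n (damped h (laplace x) - laplace x + of_real h *\<^sub>C x) \<le> h * oscillation n x h"
proof (rule seminorm_limitin_le[OF _ _ seminorm_renormed dominated_renormed])
  show "limitin (seminorm_topology P)
      (\<lambda>N. damped h (riemann_sum N x) - riemann_sum N x + of_real h *\<^sub>C x)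
      (damped h (laplace x) - laplace x + of_real h *\<^sub>C x) sequentially"
    using assms by (intro limitin_add limitin_diff limitin_damped limitin_laplace) simp_all
  show "\<forall>\<^sub>F N in sequentially.
      renormed n (damped h (riemann_sum N x) - riemann_sum N x + of_real h *\<^sub>C x)
      \<le> h * oscillation n x h + (mesh N + 1 / gap) * oscillation n x (mesh N)
        + exp (- gap * real N) * (mesh N + 1 / gap) * renormed n x + mesh N * renormed n x"
    using assms by (intro always_eventually allI renormed_riemann_sum_shift_le)
  have "(\<lambda>N. h * oscillation n x h + (mesh N + 1 / gap) * oscillation n x (mesh N)
        + exp (- gap * real N) * (mesh N + 1 / gap) * renormed n x + mesh N * renormed n x)
      \<longlonglongrightarrow> h * oscillation n x h + (0 + 1 / gap) * 0 + 0 * (0 + 1 / gap) * renormed n x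
        + 0 * renormed n x"
    by (intro tendsto_intros mesh_tendsto_0 oscillation_mesh_tendsto_0
        exp_neg_linear_tendsto_0 gap_pos)
  then show "(\<lambda>N. h * oscillation n x h + (mesh N + 1 / gap) * oscillation n x (mesh N)
        + exp (- gap * real N) * (mesh N + 1 / gap) * renormed n x + mesh N * renormed n x)
      \<longlonglongrightarrow> h * oscillation n x h"
    by simp
qed simp

lemma limitin_laplace_difference_quotient:
  "limitin (seminorm_topology P) (\<lambda>h. of_real (1 / h) *\<^sub>C (damped h (laplace x) - laplace x))
    (- x) (at_right 0)"
proof (rule limitin_seminorm_topologyI[OF _ oscillation_tendsto_0])
  fix n
  show "eventually (\<lambda>h. P n (of_real (1 / h) *\<^sub>C (damped h (laplace x) - laplace x) - - x)
      \<le> oscillation n x h) (at_right 0)"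
    using eventually_at_right_less[of 0]
  proof (rule eventually_mono)
    fix h :: real assume h: "0 < h"
    have "of_real (1 / h) *\<^sub>C (damped h (laplace x) - laplace x) - - x
        = of_real (1 / h) *\<^sub>C (damped h (laplace x) - laplace x + of_real h *\<^sub>C x)"
      using h by (simp add: scaleC_add_right scaleC_scaleC scaleC_one flip: of_real_mult)
    then have "P n (of_real (1 / h) *\<^sub>C (damped h (laplace x) - laplace x) - - x)
        \<le> 1 / h * renormed n (damped h (laplace x) - laplace x + of_real h *\<^sub>C x)"
      using h P_le_renormed[of n "damped h (laplace x) - laplace x + of_real h *\<^sub>C x"]
      by (simp add: seminorm_scaleC[OF seminorm_P] norm_divide divide_right_mono)
    also have "\<dots> \<le> 1 / h * (h * oscillation n x h)"
      using h renormed_laplace_shift_le by (intro mult_left_mono) simp_all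
    finally show "P n (of_real (1 / h) *\<^sub>C (damped h (laplace x) - laplace x) - - x)
        \<le> oscillation n x h"
      using h by simp
  qed
qed

text \<open>The generator of \<open>damped\<close> is \<open>A - l\<close>.\<close>

lemma limitin_difference_quotient_of_damped:
  assumes "limitin (seminorm_topology P) (\<lambda>h. of_real (1 / h) *\<^sub>C (damped h y - y)) z (at_right 0)"
  shows "limitin (seminorm_topology P) (\<lambda>h. of_real (1 / h) *\<^sub>C (T h y - y)) (l *\<^sub>C y + z) (at_right 0)"
proof -
  define c where "c h = exp (l * of_real h)" for h :: real
  have "(c \<longlongrightarrow> exp (l * of_real 0)) (at_right 0)"
    unfolding c_def by (intro tendsto_intros)
  then have "limitin (seminorm_topology P)
      (\<lambda>h. c h *\<^sub>C (of_real (1 / h) *\<^sub>C (damped h y - y)) + ((c h - 1) / of_real h) *\<^sub>C y)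
      (1 *\<^sub>C z + l *\<^sub>C y) (at_right 0)"
    unfolding c_def
    by (intro limitin_add limitin_scaleC assms exp_difference_quotient_tendsto) simp_all
  moreover have "eventually (\<lambda>h. c h *\<^sub>C (of_real (1 / h) *\<^sub>C (damped h y - y))
      + ((c h - 1) / of_real h) *\<^sub>C y = of_real (1 / h) *\<^sub>C (T h y - y)) (at_right 0)"
    using eventually_at_right_less[of 0]
  proof (rule eventually_mono)
    fix h :: real assume "0 < h"
    have "c h *\<^sub>C damped h y = T h y"
      by (simp add: c_def damped_def scaleC_scaleC exp_minus_inverse scaleC_one flip: exp_add)
    then have "c h *\<^sub>C (of_real (1 / h) *\<^sub>C (damped h y - y))
        = of_real (1 / h) *\<^sub>C (T h y - c h *\<^sub>C y)"
      unfolding scaleC_left_commute[of "c h"] by (simp add: scaleC_diff_right)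
    moreover have "((c h - 1) / of_real h) *\<^sub>C y = of_real (1 / h) *\<^sub>C (c h *\<^sub>C y - y)"
      by (simp add: scaleC_diff_right scaleC_diff_left scaleC_scaleC scaleC_one divide_inverse
          right_diff_distrib mult.commute)
    ultimately show "c h *\<^sub>C (of_real (1 / h) *\<^sub>C (damped h y - y)) + ((c h - 1) / of_real h) *\<^sub>C y
        = of_real (1 / h) *\<^sub>C (T h y - y)"
      by (simp add: scaleC_diff_right)
  qed
  ultimately show ?thesis
    by (simp add: scaleC_one add.commute limitin_transform_eventually)
qed

lemma laplace_in_domain:
  assumes "is_generator P T A D"
  shows "laplace x \<in> D" and "A (laplace x) = l *\<^sub>C laplace x - x"
proof -
  have lim: "limitin (seminorm_topology P) (\<lambda>h. of_real (1 / h) *\<^sub>C (T h (laplace x) - laplace x))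
      (l *\<^sub>C laplace x - x) (at_right 0)"
    using limitin_difference_quotient_of_damped[OF limitin_laplace_difference_quotient] by simp
  then show "laplace x \<in> D"
    using assms unfolding is_generator_def by blast
  then have "limitin (seminorm_topology P) (\<lambda>h. of_real (1 / h) *\<^sub>C (T h (laplace x) - laplace x))
      (A (laplace x)) (at_right 0)"
    using assms unfolding is_generator_def by blast
  from limitin_unique[OF this lim] show "A (laplace x) = l *\<^sub>C laplace x - x"
    using trivial_limit_at_right_real by blast
qed

lemma laplace_left_inverse:
  assumes G: "is_generator P T A D" and "x \<in> D"
  shows "laplace (l *\<^sub>C x - A x) = x"
proof -
  have "limitin (seminorm_topology P) (\<lambda>h. of_real (1 / h) *\<^sub>C (T h x - x)) (A x) (at_right 0)"
    using G \<open>x \<in> D\<close> unfolding is_generator_def by blast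
  then have "limitin (seminorm_topology P) (\<lambda>h. laplace (of_real (1 / h) *\<^sub>C (T h x - x)))
      (laplace (A x)) (at_right 0)"
    using continuous_map_limit[of _ _ laplace] laplace_cont_ops by (auto simp: cont_ops_def o_def)
  moreover have "eventually (\<lambda>h. laplace (of_real (1 / h) *\<^sub>C (T h x - x))
      = of_real (1 / h) *\<^sub>C (T h (laplace x) - laplace x)) (at_right 0)"
    using eventually_at_right_less[of 0]
    by (rule eventually_mono) (simp add: clinear_map_scaleC[OF laplace_clinear]
        clinear_map_diff[OF laplace_clinear] laplace_T)
  ultimately have "limitin (seminorm_topology P)
      (\<lambda>h. of_real (1 / h) *\<^sub>C (T h (laplace x) - laplace x)) (laplace (A x)) (at_right 0)"
    by (rule limitin_transform_eventually[rotated])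
  moreover have "limitin (seminorm_topology P)
      (\<lambda>h. of_real (1 / h) *\<^sub>C (T h (laplace x) - laplace x)) (A (laplace x)) (at_right 0)"
    using G laplace_in_domain(1)[OF G] unfolding is_generator_def by blast
  ultimately have "laplace (A x) = A (laplace x)"
    using trivial_limit_at_right_real by (blast intro: limitin_unique)
  then have "laplace (A x) = l *\<^sub>C laplace x - x"
    using laplace_in_domain(2)[OF G] by simp
  then show ?thesis
    by (simp add: clinear_map_diff[OF laplace_clinear] clinear_map_scaleC[OF laplace_clinear])
qed

lemma in_resolvent_set:
  assumes "is_generator P T A D"
  shows "Some l \<in> resolvent_set P A D"
proof -
  let ?f = "\<lambda>x. l *\<^sub>C x - A x"
  have f_laplace: "?f (laplace y) = y" for y
    using laplace_in_domain(2)[OF assms] by simp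
  have inj: "inj_on ?f D"
    by (rule inj_on_inverseI[of _ laplace]) (rule laplace_left_inverse[OF assms])
  have "y \<in> ?f ` D" for y
    by (rule image_eqI[where x = "laplace y"]) (simp_all add: f_laplace laplace_in_domain(1)[OF assms])
  then have "bij_betw ?f D UNIV"
    unfolding bij_betw_def using inj by blast
  moreover have "inv_into D ?f = laplace"
    using inv_into_f_f[OF inj laplace_in_domain(1)[OF assms]] by (auto simp: f_laplace)
  ultimately show ?thesis
    using laplace_L0 unfolding resolvent_set_def by auto
qed

end


theorem theorem4p1:
  fixes P :: "nat \<Rightarrow> 'a::cvector \<Rightarrow> real"
    and T :: "real \<Rightarrow> 'a \<Rightarrow> 'a"
    and A :: "'a \<Rightarrow> 'a" and D :: "'a set"
  assumes "frechet P"
    and "C0_semigroup P T"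
    and "exp_equicont P T"
    and "is_generator P T A D"
  shows "-\<infinity> \<le> spectral_bound P A D \<and> spectral_bound P A D \<le> growth_bound P T
         \<and> growth_bound P T < \<infinity>"
proof (intro conjI)
  show "-\<infinity> \<le> spectral_bound P A D" by simp
  obtain \<omega> where "exp_equicont_order P T \<omega>"
    using assms(3) by (auto simp: exp_equicont_def)
  then have "growth_bound P T \<le> ereal \<omega>"
    unfolding growth_bound_def by (intro INF_lower) simp
  then show "growth_bound P T < \<infinity>"
    by (rule le_less_trans) simp
  show "spectral_bound P A D \<le> growth_bound P T"
    unfolding spectral_bound_def
  proof (rule SUP_least, rule ccontr)
    fix l assume l: "l \<in> {l. Some l \<in> spectrum_op P A D}" and "\<not> ereal (Re l) \<le> growth_bound P T"
    then have "(INF \<omega>\<in>{\<omega>. exp_equicont_order P T \<omega>}. ereal \<omega>) < ereal (Re l)"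
      by (simp add: growth_bound_def not_le)
    then obtain \<omega> where "exp_equicont_order P T \<omega>" "\<omega> < Re l"
      unfolding INF_less_iff by auto
    then interpret laplace_transform P T \<omega> l
      using assms(1,2) by unfold_locales
    show False
      using in_resolvent_set[OF assms(4)] l by (simp add: spectrum_op_def)
  qed
qed

end
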